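(* Let $a>b>c>0$ and consider the ellipsoid $\mathcal{E}:\ \frac{x^2}{a^2}+\frac{y^2}{b^2}+\frac{z^2}{c^2}=1$. Consider the following curves in $\mathbb{R}^3$ ($t\in[0,2\pi)$): Ellipse 1: $(a\cos t,\, b\sin t,\, 0)$; Ellipse 2: $(a\cos t,\,0,\,c\sin t)$; Ellipse 3: $(0,\,b\cos t,\,c\sin t)$; Astroida 4: $\left(\frac{a^2-b^2}{a}\cos^3 t,\,\frac{a^2-b^2}{b}\sin^3 t,\,0\right)$; Astroida 5: $\left(\frac{a^2-c^2}{a}\cos^3 t,\,0,\,\frac{a^2-c^2}{c}\sin^3 t\right)$; Astroida 6: $\left(0,\,\frac{b^2-c^2}{b}\cos^3 t,\,\frac{b^2-c^2}{c}\sin^3 t\right)$; Ellipse 7: $\left(\frac{a^2-c^2}{a}\cos t,\,\frac{b^2-c^2}{b}\sin t,\,0\right)$; Ellipse 8: $\left(\frac{a^2-b^2}{a}\cos t,\,0,\,\frac{b^2-c^2}{c}\sin t\right)$; Ellipse 9: $\left(0,\,\frac{a^2-b^2}{b}\cos t,\,\frac{a^2-c^2}{c}\sin t\right)$. In what follows, "$(\pm u,\pm v)$-type points" means all four sign combinations. Then: (1) If $a^2\ge 2b^2$, Ellipse 1 and Astroida 4 intersect at the points $(\pm x_0,\pm y_0,0)$, where $x_0=\sqrt{\frac{a^4(a^2-2b^2)^3}{(a^2-b^2)(a^2+b^2)^3}}$, $y_0=\sqrt{\frac{b^4(2a^2-b^2)^3}{(a^2-b^2)(a^2+b^2)^3}}$.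 (2) If $a^2\ge 2c^2$, Ellipse 2 and Astroida 5 intersect at $(\pm x_1,0,\pm z_1)$, where $x_1=\sqrt{\frac{a^4(a^2-2c^2)^3}{(a^2-c^2)(a^2+c^2)^3}}$, $z_1=\sqrt{\frac{c^4(2a^2-c^2)^3}{(a^2-c^2)(a^2+c^2)^3}}$. (3) If $b^2\ge 2c^2$, Ellipse 3 and Astroida 6 intersect at $(0,\pm y_2,\pm z_2)$, where $y_2=\sqrt{\frac{b^4(b^2-2c^2)^3}{(b^2-c^2)(b^2+c^2)^3}}$, $z_2=\sqrt{\frac{c^4(2b^2-c^2)^3}{(b^2-c^2)(b^2+c^2)^3}}$. (4) Ellipse 1 and Ellipse 7 have no real intersection points; the (complex) common points of the conics $\frac{x^2}{a^2}+\frac{y^2}{b^2}=1$ and $\frac{a^2x^2}{(a^2-c^2)^2}+\frac{b^2y^2}{(b^2-c^2)^2}=1$ in the plane $z=0$ are $(\pm x^*,\pm y^*,0)$, where $(x^* )^2=\frac{a^2(a^2-c^2)^2(2b^2-c^2)}{(a^2-b^2)(2a^2b^2-a^2c^2-b^2c^2)}$ and $(y^* )^2=\frac{b^2(b^2-c^2)^2(2a^2-c^2)}{(b^2-a^2)(2a^2b^2-b^2c^2-a^2c^2)}$ (the latter being negative). (5) If $b^2\ge 2c^2$, Ellipse 2 and Ellipse 8 intersect at $(\pm x_3,0,\pm z_3)$, where $x_3=\sqrt{\frac{a^2(a^2-b^2)^2(2c^2-b^2)}{(a^2-c^2)(2a^2c^2-a^2b^2-b^2c^2)}}$, $z_3=\sqrt{\frac{c^2(c^2-b^2)^2(2a^2-b^2)}{(c^2-a^2)(2a^2c^2-a^2b^2-b^2c^2)}}$;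 moreover $x_1\ge x_3$ and $z_1\le z_3$, with equality when $\frac1{a^2}+\frac1{c^2}=\frac3{b^2}$. (6) If $2b^2\ge a^2\ge 2c^2$, Ellipse 3 and Ellipse 9 intersect at $(0,\pm y_4,\pm z_4)$, where $y_4=\sqrt{\frac{b^2(b^2-a^2)^2(2c^2-a^2)}{(b^2-c^2)(2b^2c^2-a^2b^2-a^2c^2)}}$, $z_4=\sqrt{\frac{c^2(c^2-a^2)^2(2b^2-a^2)}{(c^2-b^2)(2b^2c^2-a^2b^2-a^2c^2)}}$. In particular (when also $b^2\ge 2c^2$, so that $y_2,z_2$ are defined), $y_2\ge y_4$ and $z_2\le z_4$ if and only if $2b^4+2c^4-a^2b^2-a^2c^2-2b^2c^2\ge 0$. (7) If $a^2+c^2\ge 2b^2$, Astroida 4 and Ellipse 7 intersect at $(\pm x_5,\pm y_5,0)$, where $x_5=\sqrt{\frac{(a^2-c^2)^3(2b^2-a^2-c^2)^3}{a^2(b^2-a^2)(a^2+b^2-2c^2)^3}}$, $y_5=\sqrt{\frac{(b^2-c^2)^3(2a^2-b^2-c^2)^3}{b^2(a^2-b^2)(a^2+b^2-2c^2)^3}}$. (8) Astroida 5 and Ellipse 8 are tangent to each other at the points $(\pm x_6,0,\pm z_6)$, where $x_6=\sqrt{\frac{(a^2-b^2)^3}{a^2(a^2-c^2)}}$, $z_6=\sqrt{\frac{(b^2-c^2)^3}{c^2(a^2-c^2)}}$. These points divide Astroida 5 and Ellipse 8 into parts which belong to different sheets of the caustic of $\mathcal{E}$. These points lie on, inside, or outside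 $\mathcal{E}$ according as $\frac1{a^2}+\frac1{c^2}=\frac3{b^2}$, $<\frac3{b^2}$, or $>\frac3{b^2}$, respectively. (9) If $a^2+c^2\le 2b^2$, Astroida 6 and Ellipse 9 intersect at $(0,\pm y_7,\pm z_7)$, where $y_7=\sqrt{\frac{(b^2-a^2)^3(2c^2-b^2-a^2)^3}{b^2(c^2-b^2)(b^2+c^2-2a^2)^3}}$, $z_7=\sqrt{\frac{(c^2-a^2)^3(2b^2-c^2-a^2)^3}{c^2(b^2-c^2)(b^2+c^2-2a^2)^3}}$. These points lie on, inside, or outside $\mathcal{E}$ according as $2b^4+2c^4-a^2b^2-a^2c^2-2b^2c^2=0$, $<0$, or $>0$, respectively.
   Context: The caustic (focal surface, centro-surface) of $\mathcal{E}$ consists of two sheets: for each point $P$ of $\mathcal{E}$ with outer normal $\mathbf N=(x/a^2,y/b^2,z/c^2)$ and principal curvatures $k_1\le k_2$ (principal radii $R_i=1/k_i$), the centers of principal curvature are $C_i=P-R_i\,\mathbf N/|\mathbf N|$; the sheet formed by the points $C_1$ (greater radius) and the sheet formed by the points $C_2$ (smaller radius) are the two caustics. Equivalently, the caustic is the set of points $(X,Y,Z)$ for which there is $t$ with $\frac{a^2X^2}{(a^2+t)^2}+\frac{b^2Y^2}{(b^2+t)^2}+\frac{c^2Z^2}{(c^2+t)^2}=1$ and $\frac{a^2X^2}{(a^2+t)^3}+\frac{b^2Y^2}{(b^2+t)^3}+\frac{c^2Z^2}{(c^2+t)^3}=0$. The curves listed are the intersections of $\mathcal{E}$ and of its caustics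 with the coordinate planes. *)

theory Defs
  imports "HOL-Analysis.Analysis"
begin

type_synonym pt3 = "real \<times> real \<times> real"

definition ellq :: "real \<Rightarrow> real \<Rightarrow> real \<Rightarrow> pt3 \<Rightarrow> real" where
  "ellq a b c P = (case P of (x, y, z) \<Rightarrow> x^2/a^2 + y^2/b^2 + z^2/c^2)"

definition ellipsoid :: "real \<Rightarrow> real \<Rightarrow> real \<Rightarrow> pt3 set" where
  "ellipsoid a b c = {P. ellq a b c P = 1}"

definition ell_normal :: "real \<Rightarrow> real \<Rightarrow> real \<Rightarrow> pt3 \<Rightarrow> pt3" where
  "ell_normal a b c P = (case P of (x, y, z) \<Rightarrow> (x/a^2, y/b^2, z/c^2))"

text \<open>Weingarten map (differential of the unit outer normal n = N/|N|) of the
  level surface at P applied to a tangent vector v: the tangential projection of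
  diag(1/a^2,1/b^2,1/c^2) v divided by |N|.\<close>
definition weingarten :: "real \<Rightarrow> real \<Rightarrow> real \<Rightarrow> pt3 \<Rightarrow> pt3 \<Rightarrow> pt3" where
  "weingarten a b c P v =
     (let N = ell_normal a b c P;
          Dv = (case v of (v1, v2, v3) \<Rightarrow> (v1/a^2, v2/b^2, v3/c^2))
      in (1 / norm N) *\<^sub>R (Dv - ((Dv \<bullet> N) / (N \<bullet> N)) *\<^sub>R N))"

definition principal_curvatures :: "real \<Rightarrow> real \<Rightarrow> real \<Rightarrow> pt3 \<Rightarrow> real set" where
  "principal_curvatures a b c P =
     {k. \<exists>v. v \<noteq> 0 \<and> v \<bullet> ell_normal a b c P = 0 \<and> weingarten a b c P v = k *\<^sub>R v}"

definition kappa1 :: "real \<Rightarrow> real \<Rightarrow> real \<Rightarrow> pt3 \<Rightarrow> real" where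
  "kappa1 a b c P = Min (principal_curvatures a b c P)"

definition kappa2 :: "real \<Rightarrow> real \<Rightarrow> real \<Rightarrow> pt3 \<Rightarrow> real" where
  "kappa2 a b c P = Max (principal_curvatures a b c P)"

definition curvature_center :: "real \<Rightarrow> real \<Rightarrow> real \<Rightarrow> pt3 \<Rightarrow> real \<Rightarrow> pt3" where
  "curvature_center a b c P k =
     P - (1 / k) *\<^sub>R ((1 / norm (ell_normal a b c P)) *\<^sub>R ell_normal a b c P)"

definition caustic_sheet1 :: "real \<Rightarrow> real \<Rightarrow> real \<Rightarrow> pt3 set" where
  "caustic_sheet1 a b c = {curvature_center a b c P (kappa1 a b c P) | P. P \<in> ellipsoid a b c}"

definition caustic_sheet2 :: "real \<Rightarrow> real \<Rightarrow> real \<Rightarrow> pt3 set" where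
  "caustic_sheet2 a b c = {curvature_center a b c P (kappa2 a b c P) | P. P \<in> ellipsoid a b c}"

definition curve :: "(real \<Rightarrow> pt3) \<Rightarrow> pt3 set" where
  "curve f = f ` {0..<2*pi}"

definition ellipse1 :: "real \<Rightarrow> real \<Rightarrow> real \<Rightarrow> real \<Rightarrow> pt3" where
  "ellipse1 a b c t = (a * cos t, b * sin t, 0)"
definition ellipse2 :: "real \<Rightarrow> real \<Rightarrow> real \<Rightarrow> real \<Rightarrow> pt3" where
  "ellipse2 a b c t = (a * cos t, 0, c * sin t)"
definition ellipse3 :: "real \<Rightarrow> real \<Rightarrow> real \<Rightarrow> real \<Rightarrow> pt3" where
  "ellipse3 a b c t = (0, b * cos t, c * sin t)"
definition astroida4 :: "real \<Rightarrow> real \<Rightarrow> real \<Rightarrow> real \<Rightarrow> pt3" where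
  "astroida4 a b c t = ((a^2 - b^2)/a * (cos t)^3, (a^2 - b^2)/b * (sin t)^3, 0)"
definition astroida5 :: "real \<Rightarrow> real \<Rightarrow> real \<Rightarrow> real \<Rightarrow> pt3" where
  "astroida5 a b c t = ((a^2 - c^2)/a * (cos t)^3, 0, (a^2 - c^2)/c * (sin t)^3)"
definition astroida6 :: "real \<Rightarrow> real \<Rightarrow> real \<Rightarrow> real \<Rightarrow> pt3" where
  "astroida6 a b c t = (0, (b^2 - c^2)/b * (cos t)^3, (b^2 - c^2)/c * (sin t)^3)"
definition ellipse7 :: "real \<Rightarrow> real \<Rightarrow> real \<Rightarrow> real \<Rightarrow> pt3" where
  "ellipse7 a b c t = ((a^2 - c^2)/a * cos t, (b^2 - c^2)/b * sin t, 0)"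
definition ellipse8 :: "real \<Rightarrow> real \<Rightarrow> real \<Rightarrow> real \<Rightarrow> pt3" where
  "ellipse8 a b c t = ((a^2 - b^2)/a * cos t, 0, (b^2 - c^2)/c * sin t)"
definition ellipse9 :: "real \<Rightarrow> real \<Rightarrow> real \<Rightarrow> real \<Rightarrow> pt3" where
  "ellipse9 a b c t = (0, (a^2 - b^2)/b * cos t, (a^2 - c^2)/c * sin t)"

definition pm_xy :: "real \<Rightarrow> real \<Rightarrow> pt3 set" where
  "pm_xy u v = {(u, v, 0), (u, -v, 0), (-u, v, 0), (-u, -v, 0)}"
definition pm_xz :: "real \<Rightarrow> real \<Rightarrow> pt3 set" where
  "pm_xz u w = {(u, 0, w), (u, 0, -w), (-u, 0, w), (-u, 0, -w)}"
definition pm_yz :: "real \<Rightarrow> real \<Rightarrow> pt3 set" where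
  "pm_yz v w = {(0, v, w), (0, v, -w), (0, -v, w), (0, -v, -w)}"

definition tangent_at :: "(real \<Rightarrow> pt3) \<Rightarrow> (real \<Rightarrow> pt3) \<Rightarrow> pt3 \<Rightarrow> bool" where
  "tangent_at f g p \<longleftrightarrow>
     (\<exists>t s u w. t \<in> {0..<2*pi} \<and> s \<in> {0..<2*pi} \<and> f t = p \<and> g s = p \<and>
        (f has_vector_derivative u) (at t) \<and> (g has_vector_derivative w) (at s) \<and>
        u \<noteq> 0 \<and> w \<noteq> 0 \<and> (\<exists>k. u = k *\<^sub>R w))"

end

(* Writing u = cos^2 t, the point (D/p cos^3 t, D/q sin^3 t) of an astroid with D = E - F lies on the
   ellipse with semi-axes E/p and F/q iff (D/E)^2 u^3 + (D/F)^2 (1 - u)^3 = 1, and this cubic factors as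
   (D u - E)^2 (E (E - 2 F) - D (E + F) u) = 0.  If E and F have the same sign the double root E/D lies
   outside [0, 1] and the simple root gives the four intersection points (claims 1-3, 7, 9); if they
   have opposite signs the double root lies in (0, 1) and the two curves touch there (claim 8).
   Two of the ellipses meet where a 2x2 linear system in (x^2, y^2) has its solution (claims 4-6), and
   a single polynomial identity compares that solution with the astroid points (claims 5, 6).
   Along the section y = 0 of the ellipsoid the principal directions are the y-axis and the tangent
   of the section; their centres of curvature run along Ellipse 8 and Astroida 5 respectively, and
   the two principal radii change order exactly where |x| passes x6.  *)

theory Submission
  imports Defs
begin

section \<open>Ellipses and astroids in the plane\<close>

definition ellipse_set :: "real \<Rightarrow> real \<Rightarrow> (real \<times> real) set" where
  "ellipse_set p q = (\<lambda>t. (p * cos t, q * sin t)) ` {0..<2*pi}"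

definition astroid_set :: "real \<Rightarrow> real \<Rightarrow> (real \<times> real) set" where
  "astroid_set p q = (\<lambda>t. (p * cos t ^ 3, q * sin t ^ 3)) ` {0..<2*pi}"

lemma ellipse_set_iff:
  assumes "p \<noteq> 0" "q \<noteq> 0"
  shows "(x, y) \<in> ellipse_set p q \<longleftrightarrow> (x/p)^2 + (y/q)^2 = 1"
proof
  assume "(x/p)^2 + (y/q)^2 = 1"
  then obtain t where "0 \<le> t" "t < 2*pi" "x/p = cos t" "y/q = sin t"
    using sincos_total_2pi by metis
  then show "(x, y) \<in> ellipse_set p q"
    using assms unfolding ellipse_set_def by (auto simp: field_simps image_iff)
qed (use assms in \<open>auto simp: ellipse_set_def\<close>)

lemma ellipse_set_cong_square:
  assumes "p \<noteq> 0" "q \<noteq> 0" "p'^2 = p^2" "q'^2 = q^2"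
  shows "ellipse_set p' q' = ellipse_set p q"
proof -
  have "p' \<noteq> 0" "q' \<noteq> 0"
    using assms by auto
  then show ?thesis
    using assms by (auto simp: set_eq_iff ellipse_set_iff power_divide)
qed

lemma astroid_set_iff:
  assumes "p \<noteq> 0" "q \<noteq> 0"
  shows "(x, y) \<in> astroid_set p q \<longleftrightarrow>
         (\<exists>u. 0 \<le> u \<and> u \<le> 1 \<and> x^2 = p^2 * u^3 \<and> y^2 = q^2 * (1 - u)^3)"
proof
  assume "(x, y) \<in> astroid_set p q"
  then obtain t where t: "x = p * cos t ^ 3" "y = q * sin t ^ 3"
    unfolding astroid_set_def by auto
  show "\<exists>u. 0 \<le> u \<and> u \<le> 1 \<and> x^2 = p^2 * u^3 \<and> y^2 = q^2 * (1 - u)^3"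
  proof (intro exI conjI)
    show "cos t ^ 2 \<le> 1" by (simp add: abs_square_le_1)
    show "x^2 = p^2 * (cos t ^ 2)^3" "y^2 = q^2 * (1 - cos t ^ 2)^3"
      using t by (simp_all add: power_mult_distrib flip: power_mult sin_squared_eq)
  qed simp
next
  assume "\<exists>u. 0 \<le> u \<and> u \<le> 1 \<and> x^2 = p^2 * u^3 \<and> y^2 = q^2 * (1 - u)^3"
  then obtain u where u: "0 \<le> u" "u \<le> 1" "x^2 = p^2 * u^3" "y^2 = q^2 * (1 - u)^3"
    by blast
  define c s where "c = root 3 (x/p)" and "s = root 3 (y/q)"
  have "(c^2)^3 = (c^3)^2" "(s^2)^3 = (s^3)^2"
    by (simp_all flip: power_mult)
  then have "(c^2)^3 = u^3" "(s^2)^3 = (1 - u)^3"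
    using u assms by (simp_all add: c_def s_def power_divide odd_real_root_pow)
  then have "c^2 = u" "s^2 = 1 - u"
    using u by (auto intro: power_eq_imp_eq_base[of _ 3] simp del: power_mult simp flip: power_mult)
  then obtain t where "0 \<le> t" "t < 2*pi" "c = cos t" "s = sin t"
    using sincos_total_2pi[of c s] by auto
  moreover have "x = p * c^3" "y = q * s^3"
    using assms by (simp_all add: c_def s_def odd_real_root_pow)
  ultimately show "(x, y) \<in> astroid_set p q"
    unfolding astroid_set_def by auto
qed

lemma evolute_cubic_factor:
  fixes E F u :: real
  assumes "E \<noteq> 0" "F \<noteq> 0"
  shows "((E - F)/E)^2 * u^3 + ((E - F)/F)^2 * (1 - u)^3 = 1 \<longleftrightarrow>
         ((E - F)*u - E)^2 * (E*(E - 2*F) - (E - F)*(E + F)*u) = 0"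
proof -
  have "((E - F)/E)^2 * u^3 + ((E - F)/F)^2 * (1 - u)^3 - 1
      = ((E - F)*u - E)^2 * (E*(E - 2*F) - (E - F)*(E + F)*u) / (E^2 * F^2)"
    using assms by (simp add: field_simps) (simp add: algebra_simps power2_eq_square power3_eq_cube)
  then show ?thesis
    using assms by (simp add: eq_iff_diff_eq_0[of _ 1])
qed

lemma evolute_cubic_root_transversal:
  fixes E F u :: real
  assumes "E * F > 0" "E \<noteq> F" "0 \<le> u" "u \<le> 1"
  shows "((E - F)/E)^2 * u^3 + ((E - F)/F)^2 * (1 - u)^3 = 1 \<longleftrightarrow>
         u = E*(E - 2*F) / ((E - F)*(E + F))"
proof -
  have "E * ((1 - u)*E + u*F) > 0"
  proof -
    have "(1 - u)*(- (E^2)) + u*(- (E*F)) < 0"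
      using assms by (intro convex_bound_lt) auto
    then show ?thesis
      by (simp add: algebra_simps power2_eq_square)
  qed
  then have "(1 - u)*E + u*F \<noteq> 0"
    by fastforce
  moreover have "(E - F)*u - E = -((1 - u)*E + u*F)"
    by (simp add: algebra_simps)
  ultimately have tangency_factor: "(E - F)*u - E \<noteq> 0"
    by simp
  have "E \<noteq> 0" "F \<noteq> 0" "(E - F)*(E + F) \<noteq> 0"
    using assms by (auto simp: zero_less_mult_iff)
  moreover have "E*(E - 2*F) - (E - F)*(E + F)*u = 0 \<longleftrightarrow> u = E*(E - 2*F) / ((E - F)*(E + F))"
    using \<open>(E - F)*(E + F) \<noteq> 0\<close> by (auto simp: eq_divide_eq mult.commute)
  ultimately show ?thesis
    unfolding evolute_cubic_factor[OF \<open>E \<noteq> 0\<close> \<open>F \<noteq> 0\<close>] mult_eq_0_iff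
    using tangency_factor by simp
qed

lemma evolute_cubic_root_tangent:
  fixes E F u :: real
  assumes "E * F < 0" "0 \<le> u" "u \<le> 1"
  shows "((E - F)/E)^2 * u^3 + ((E - F)/F)^2 * (1 - u)^3 = 1 \<longleftrightarrow> u = E / (E - F)"
proof -
  have "2*E*F < 0"
    using assms by (simp add: mult.assoc)
  then have "E^2 - 2*E*F > 0" "F^2 - 2*E*F > 0"
    using zero_le_power2[of E] zero_le_power2[of F] by linarith+
  then have "(1 - u)*(- (E^2 - 2*E*F)) + u*(- (F^2 - 2*E*F)) < 0"
    using assms by (intro convex_bound_lt) auto
  moreover have "E*(E - 2*F) - (E - F)*(E + F)*u = (1 - u)*(E^2 - 2*E*F) + u*(F^2 - 2*E*F)"
    by (simp add: algebra_simps power2_eq_square)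
  ultimately have transversal_factor: "E*(E - 2*F) - (E - F)*(E + F)*u \<noteq> 0"
    by linarith
  have "E \<noteq> F" "E \<noteq> 0" "F \<noteq> 0"
    using assms by auto
  then show ?thesis
    unfolding evolute_cubic_factor[OF \<open>E \<noteq> 0\<close> \<open>F \<noteq> 0\<close>] mult_eq_0_iff
    using transversal_factor by (auto simp: field_simps)
qed

lemma ellipse_astroid_inter:
  fixes p q E F w :: real
  assumes "p \<noteq> 0" "q \<noteq> 0" "E \<noteq> 0" "F \<noteq> 0" "E \<noteq> F" "0 \<le> w" "w \<le> 1"
    and "\<And>u. 0 \<le> u \<Longrightarrow> u \<le> 1 \<Longrightarrow>
                 ((E - F)/E)^2 * u^3 + ((E - F)/F)^2 * (1 - u)^3 = 1 \<longleftrightarrow> u = w"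
  shows "ellipse_set (E/p) (F/q) \<inter> astroid_set ((E - F)/p) ((E - F)/q) =
         {(x, y). x^2 = ((E - F)/p)^2 * w^3 \<and> y^2 = ((E - F)/q)^2 * (1 - w)^3}"
proof -
  have on_ellipse: "(x/(E/p))^2 + (y/(F/q))^2 = ((E - F)/E)^2 * u^3 + ((E - F)/F)^2 * (1 - u)^3"
    if "x^2 = ((E - F)/p)^2 * u^3" "y^2 = ((E - F)/q)^2 * (1 - u)^3" for x y u
    using that assms(1-4) by (simp add: power_divide field_simps)
  have "(x, y) \<in> ellipse_set (E/p) (F/q) \<inter> astroid_set ((E - F)/p) ((E - F)/q) \<longleftrightarrow>
        x^2 = ((E - F)/p)^2 * w^3 \<and> y^2 = ((E - F)/q)^2 * (1 - w)^3" for x y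
    using assms on_ellipse by (auto simp: ellipse_set_iff astroid_set_iff)
  then show ?thesis
    by auto
qed

lemma ellipse_astroid_inter_transversal:
  fixes p q E F :: real
  assumes "p \<noteq> 0" "q \<noteq> 0" "E * F > 0" "E \<noteq> F"
    and "E*(E - 2*F) / ((E - F)*(E + F)) \<ge> 0" "F*(2*E - F) / ((E - F)*(E + F)) \<ge> 0"
  defines "X \<equiv> E^3*(E - 2*F)^3 / (p^2*(E - F)*(E + F)^3)"
    and "Y \<equiv> F^3*(2*E - F)^3 / (q^2*(E - F)*(E + F)^3)"
  shows "ellipse_set (E/p) (F/q) \<inter> astroid_set ((E - F)/p) ((E - F)/q) = {(x, y). x^2 = X \<and> y^2 = Y}"
    and "X \<ge> 0" "Y \<ge> 0"
proof -
  define w where "w = E*(E - 2*F) / ((E - F)*(E + F))"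
  have nz: "E \<noteq> 0" "F \<noteq> 0" "E - F \<noteq> 0" "E + F \<noteq> 0"
    using assms by (auto simp: zero_less_mult_iff)
  have cancel: "((E - F)/r)^2 * (N / ((E - F)^3*M)) = N / (r^2*(E - F)*M)" for r N M
    using nz(3) by (simp add: power2_eq_square power3_eq_cube)
  have "1 - w = ((E - F)*(E + F) - E*(E - 2*F)) / ((E - F)*(E + F))"
    using nz by (simp add: w_def diff_divide_distrib)
  also have "(E - F)*(E + F) - E*(E - 2*F) = F*(2*E - F)"
    by (simp add: algebra_simps)
  finally have w': "1 - w = F*(2*E - F) / ((E - F)*(E + F))" .
  then have w: "0 \<le> w" "w \<le> 1"
    using assms(5,6) by (simp_all add: w_def)
  have "((E - F)/p)^2 * w^3 = ((E - F)/p)^2 * (E^3*(E - 2*F)^3 / ((E - F)^3*(E + F)^3))"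
    and "((E - F)/q)^2 * (1 - w)^3 = ((E - F)/q)^2 * (F^3*(2*E - F)^3 / ((E - F)^3*(E + F)^3))"
    unfolding w' by (simp_all add: w_def power_divide power_mult_distrib)
  then have X: "X = ((E - F)/p)^2 * w^3" and Y: "Y = ((E - F)/q)^2 * (1 - w)^3"
    unfolding X_def Y_def cancel by simp_all
  show "X \<ge> 0" "Y \<ge> 0"
    unfolding X Y using w by simp_all
  show "ellipse_set (E/p) (F/q) \<inter> astroid_set ((E - F)/p) ((E - F)/q) = {(x, y). x^2 = X \<and> y^2 = Y}"
    unfolding X Y using assms(1-4) nz w
    by (intro ellipse_astroid_inter) (simp_all add: evolute_cubic_root_transversal w_def)
qed

lemma ellipse_astroid_inter_tangent:
  fixes p q E F :: real
  assumes "p \<noteq> 0" "q \<noteq> 0" "E * F < 0"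
  defines "X \<equiv> E^3 / (p^2*(E - F))" and "Y \<equiv> - (F^3) / (q^2*(E - F))"
  shows "ellipse_set (E/p) (F/q) \<inter> astroid_set ((E - F)/p) ((E - F)/q) = {(x, y). x^2 = X \<and> y^2 = Y}"
    and "X \<ge> 0" "Y \<ge> 0"
proof -
  define w where "w = E / (E - F)"
  have nz: "E \<noteq> 0" "F \<noteq> 0" "E - F \<noteq> 0"
    using assms by auto
  have cancel: "((E - F)/r)^2 * (N / ((E - F)^3*M)) = N / (r^2*(E - F)*M)" for r N M
    using nz(3) by (simp add: power2_eq_square power3_eq_cube)
  have w': "1 - w = - F / (E - F)"
    using nz by (simp add: w_def field_simps)
  have w: "0 \<le> w" "w \<le> 1"
    using assms by (auto simp: w_def divide_simps mult_less_0_iff)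
  have "((E - F)/p)^2 * w^3 = ((E - F)/p)^2 * (E^3 / ((E - F)^3 * 1))"
    and "((E - F)/q)^2 * (1 - w)^3 = ((E - F)/q)^2 * (- (F^3) / ((E - F)^3 * 1))"
    unfolding w' by (simp_all add: w_def power_divide)
  then have X: "X = ((E - F)/p)^2 * w^3" and Y: "Y = ((E - F)/q)^2 * (1 - w)^3"
    unfolding X_def Y_def cancel by simp_all
  show "X \<ge> 0" "Y \<ge> 0"
    unfolding X Y using w by simp_all
  show "ellipse_set (E/p) (F/q) \<inter> astroid_set ((E - F)/p) ((E - F)/q) = {(x, y). x^2 = X \<and> y^2 = Y}"
    unfolding X Y using assms(1-3) nz w
    by (intro ellipse_astroid_inter) (simp_all add: evolute_cubic_root_tangent w_def)
qed

section \<open>Two ellipses of a pencil\<close>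

lemma linear_system_2x2_unique:
  fixes m11 m12 m21 m22 k1 k2 X Y X0 Y0 :: "'a::field"
  assumes "m11*m22 - m12*m21 \<noteq> 0"
    and "m11*X0 + m12*Y0 = k1" "m21*X0 + m22*Y0 = k2"
  shows "(m11*X + m12*Y = k1 \<and> m21*X + m22*Y = k2) \<longleftrightarrow> (X = X0 \<and> Y = Y0)"
proof
  assume "m11*X + m12*Y = k1 \<and> m21*X + m22*Y = k2"
  then have "m11*(X - X0) + m12*(Y - Y0) = 0" "m21*(X - X0) + m22*(Y - Y0) = 0"
    using assms(2,3) by (simp_all add: algebra_simps)
  have "(m11*m22 - m12*m21) * (X - X0) = m22*(m11*(X - X0) + m12*(Y - Y0)) - m12*(m21*(X - X0) + m22*(Y - Y0))"
       "(m11*m22 - m12*m21) * (Y - Y0) = m11*(m21*(X - X0) + m22*(Y - Y0)) - m21*(m11*(X - X0) + m12*(Y - Y0))"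
    by (simp_all add: algebra_simps)
  then have "(m11*m22 - m12*m21) * (X - X0) = 0" "(m11*m22 - m12*m21) * (Y - Y0) = 0"
    using \<open>m11*(X - X0) + m12*(Y - Y0) = 0\<close> \<open>m21*(X - X0) + m22*(Y - Y0) = 0\<close> by simp_all
  then show "X = X0 \<and> Y = Y0"
    using assms(1) by simp
qed (use assms in simp)

lemma conic_pencil_determinant_nonzero:
  fixes P Q R :: "'a::field"
  assumes "P \<noteq> 0" "Q \<noteq> 0" "R \<noteq> 0" "P \<noteq> Q" "P \<noteq> R" "Q \<noteq> R" "2*P*Q - P*R - Q*R \<noteq> 0"
  shows "(1/P) * (Q/(Q - R)^2) - (1/Q) * (P/(P - R)^2) \<noteq> 0"
proof -
  have "P - R \<noteq> 0" "Q - R \<noteq> 0"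
    using assms by auto
  have "Q^2*(P - R)^2 - P^2*(Q - R)^2 = R*(P - Q)*(2*P*Q - P*R - Q*R)"
    by (simp add: algebra_simps power2_eq_square)
  then have "(1/P) * (Q/(Q - R)^2) - (1/Q) * (P/(P - R)^2)
      = R*(P - Q)*(2*P*Q - P*R - Q*R) / (P*Q*(P - R)^2*(Q - R)^2)"
    using assms \<open>P - R \<noteq> 0\<close> \<open>Q - R \<noteq> 0\<close>
    by (simp add: field_simps power2_eq_square[of P] power2_eq_square[of Q])
  then show ?thesis
    using assms \<open>P - R \<noteq> 0\<close> \<open>Q - R \<noteq> 0\<close> by simp
qed

lemma conic_pencil_solution:
  fixes P Q R s t :: "'a::field"
  assumes "P \<noteq> 0" "Q \<noteq> 0" "R \<noteq> 0" "P \<noteq> Q" "P \<noteq> R" "Q \<noteq> R" "2*P*Q - P*R - Q*R \<noteq> 0"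
  shows "(s/P + t/Q = 1 \<and> P * s/(P - R)^2 + Q * t/(Q - R)^2 = 1) \<longleftrightarrow>
         (s = P*(P - R)^2*(2*Q - R) / ((P - Q)*(2*P*Q - P*R - Q*R)) \<and>
          t = Q*(Q - R)^2*(2*P - R) / ((Q - P)*(2*P*Q - Q*R - P*R)))"
proof -
  define K where "K = 2*P*Q - P*R - Q*R"
  have nz: "P - Q \<noteq> 0" "Q - P \<noteq> 0" "P - R \<noteq> 0" "Q - R \<noteq> 0" "K \<noteq> 0"
    using assms by (auto simp: K_def)
  have K': "2*P*Q - Q*R - P*R = K"
    by (simp add: K_def)
  note det = conic_pencil_determinant_nonzero[OF assms]
  have combine: "x / ((P - Q)*K) + y / ((Q - P)*K) = (x - y) / ((P - Q)*K)" for x y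
  proof -
    have "y / ((Q - P)*K) = - (y / ((P - Q)*K))"
      by (metis minus_diff_eq minus_divide_right mult_minus_left)
    then show ?thesis
      by (simp add: diff_divide_distrib)
  qed
  have "(1/P) * (P*(P - R)^2*(2*Q - R) / ((P - Q)*K))
       + (1/Q) * (Q*(Q - R)^2*(2*P - R) / ((Q - P)*K))
      = ((P - R)^2*(2*Q - R) - (Q - R)^2*(2*P - R)) / ((P - Q)*K)"
    using assms by (simp flip: combine)
  also have "(P - R)^2*(2*Q - R) - (Q - R)^2*(2*P - R) = (P - Q)*K"
    by (simp add: K_def algebra_simps power2_eq_square)
  finally have sol1: "(1/P) * (P*(P - R)^2*(2*Q - R) / ((P - Q)*K))
       + (1/Q) * (Q*(Q - R)^2*(2*P - R) / ((Q - P)*K)) = 1"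
    using nz by simp
  have "(P/(P - R)^2) * (P*(P - R)^2*(2*Q - R) / ((P - Q)*K))
       + (Q/(Q - R)^2) * (Q*(Q - R)^2*(2*P - R) / ((Q - P)*K))
      = (P^2*(2*Q - R) - Q^2*(2*P - R)) / ((P - Q)*K)"
    using nz by (simp add: power2_eq_square[of P] power2_eq_square[of Q] mult.assoc flip: combine)
  also have "P^2*(2*Q - R) - Q^2*(2*P - R) = (P - Q)*K"
    by (simp add: K_def algebra_simps power2_eq_square)
  finally have sol2: "(P/(P - R)^2) * (P*(P - R)^2*(2*Q - R) / ((P - Q)*K))
       + (Q/(Q - R)^2) * (Q*(Q - R)^2*(2*P - R) / ((Q - P)*K)) = 1"
    using nz by simp
  show ?thesis
    unfolding K_def[symmetric] K'
    using linear_system_2x2_unique[OF det sol1 sol2] by simp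
qed

lemma ellipse_pencil_inter:
  fixes p q R :: real
  assumes "p \<noteq> 0" "q \<noteq> 0" "R \<noteq> 0" "p^2 \<noteq> q^2" "p^2 \<noteq> R" "q^2 \<noteq> R"
    and "2*p^2*q^2 - p^2*R - q^2*R \<noteq> 0"
  shows "ellipse_set p q \<inter> ellipse_set ((p^2 - R)/p) ((q^2 - R)/q) =
         {(x, y). x^2 = p^2*(p^2 - R)^2*(2*q^2 - R) / ((p^2 - q^2)*(2*p^2*q^2 - p^2*R - q^2*R)) \<and>
                  y^2 = q^2*(q^2 - R)^2*(2*p^2 - R) / ((q^2 - p^2)*(2*p^2*q^2 - q^2*R - p^2*R))}"
proof -
  have squares: "(x/((p^2 - R)/p))^2 = p^2 * x^2/(p^2 - R)^2" "(y/((q^2 - R)/q))^2 = q^2 * y^2/(q^2 - R)^2"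
    "(x/p)^2 = x^2/p^2" "(y/q)^2 = y^2/q^2" for x y
    by (simp_all add: power_divide field_simps)
  have axes: "(p^2 - R)/p \<noteq> 0" "(q^2 - R)/q \<noteq> 0"
    using assms by simp_all
  have "(x, y) \<in> ellipse_set p q \<inter> ellipse_set ((p^2 - R)/p) ((q^2 - R)/q) \<longleftrightarrow>
      x^2 = p^2*(p^2 - R)^2*(2*q^2 - R) / ((p^2 - q^2)*(2*p^2*q^2 - p^2*R - q^2*R)) \<and>
      y^2 = q^2*(q^2 - R)^2*(2*p^2 - R) / ((q^2 - p^2)*(2*p^2*q^2 - q^2*R - p^2*R))" for x y
    unfolding Int_iff ellipse_set_iff[OF assms(1,2)] ellipse_set_iff[OF axes] squares
    using assms by (intro conic_pencil_solution) auto
  then show ?thesis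
    by auto
qed

section \<open>The intersection points of the nine curves\<close>

lemma ellipse_evolute_inter:
  fixes a b :: real
  assumes "a > b" "b > 0" "a^2 \<ge> 2*b^2"
  defines "X \<equiv> a^4*(a^2 - 2*b^2)^3 / ((a^2 - b^2)*(a^2 + b^2)^3)"
    and "Y \<equiv> b^4*(2*a^2 - b^2)^3 / ((a^2 - b^2)*(a^2 + b^2)^3)"
  shows "ellipse_set a b \<inter> astroid_set ((a^2 - b^2)/a) ((a^2 - b^2)/b) = {(x, y). x^2 = X \<and> y^2 = Y}"
    and "X \<ge> 0" "Y \<ge> 0"
proof -
  have "a^2 > b^2" "b^2 > 0"
    using assms by (simp_all add: power_strict_mono)
  then have "a^2 - b^2 > 0" "a^2 + b^2 > 0" "2*a^2 - b^2 > 0"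
    by linarith+
  then have hyps: "a \<noteq> 0" "b \<noteq> 0" "a^2 * b^2 > 0" "a^2 \<noteq> b^2"
    "a^2*(a^2 - 2*b^2) / ((a^2 - b^2)*(a^2 + b^2)) \<ge> 0"
    "b^2*(2*a^2 - b^2) / ((a^2 - b^2)*(a^2 + b^2)) \<ge> 0"
    using assms by (auto intro!: divide_nonneg_pos mult_nonneg_nonneg)
  have "(a^2)^3*(a^2 - 2*b^2)^3 / (a^2*(a^2 - b^2)*(a^2 + b^2)^3) = X"
    "(b^2)^3*(2*a^2 - b^2)^3 / (b^2*(a^2 - b^2)*(a^2 + b^2)^3) = Y"
  proof -
    have "x^3 * N / (x * M * K) = x^2 * N / (M * K)" if "x \<noteq> 0" for x N M K :: real
      using that by (cases "M * K = 0") (auto simp: field_simps power2_eq_square power3_eq_cube)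
    from this[of "a^2" "(a^2 - 2*b^2)^3" "a^2 - b^2" "(a^2 + b^2)^3"]
      this[of "b^2" "(2*a^2 - b^2)^3" "a^2 - b^2" "(a^2 + b^2)^3"]
    show "(a^2)^3*(a^2 - 2*b^2)^3 / (a^2*(a^2 - b^2)*(a^2 + b^2)^3) = X"
      "(b^2)^3*(2*a^2 - b^2)^3 / (b^2*(a^2 - b^2)*(a^2 + b^2)^3) = Y"
      using assms by simp_all
  qed
  moreover have "a^2/a = a" "b^2/b = b"
    by (simp_all add: power2_eq_square)
  ultimately show "ellipse_set a b \<inter> astroid_set ((a^2 - b^2)/a) ((a^2 - b^2)/b) = {(x, y). x^2 = X \<and> y^2 = Y}"
    and "X \<ge> 0" "Y \<ge> 0"
    using ellipse_astroid_inter_transversal[OF hyps] by simp_all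
qed

text \<open>Astroida 4 against Ellipse 7 is the case (a, b, c); Astroida 6 against Ellipse 9 is the case
  (b, c, a), where both semi-axes of the ellipse come out negated.\<close>

lemma ellipse_evolute_inter_shifted:
  fixes a b c :: real
  assumes "a \<noteq> 0" "b \<noteq> 0" "(a^2 - c^2)*(b^2 - c^2) > 0" "a^2 \<noteq> b^2"
    and "(a^2 - c^2)*(a^2 + c^2 - 2*b^2) / ((a^2 - b^2)*(a^2 + b^2 - 2*c^2)) \<ge> 0"
    and "(b^2 - c^2)*(2*a^2 - b^2 - c^2) / ((a^2 - b^2)*(a^2 + b^2 - 2*c^2)) \<ge> 0"
  defines "X \<equiv> (a^2 - c^2)^3*(2*b^2 - a^2 - c^2)^3 / (a^2*(b^2 - a^2)*(a^2 + b^2 - 2*c^2)^3)"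
    and "Y \<equiv> (b^2 - c^2)^3*(2*a^2 - b^2 - c^2)^3 / (b^2*(a^2 - b^2)*(a^2 + b^2 - 2*c^2)^3)"
  shows "ellipse_set ((a^2 - c^2)/a) ((b^2 - c^2)/b) \<inter> astroid_set ((a^2 - b^2)/a) ((a^2 - b^2)/b) =
           {(x, y). x^2 = X \<and> y^2 = Y}"
    and "X \<ge> 0" "Y \<ge> 0"
proof -
  have E_minus_F: "(a^2 - c^2) - (b^2 - c^2) = a^2 - b^2"
    and E_plus_F: "(a^2 - c^2) + (b^2 - c^2) = a^2 + b^2 - 2*c^2"
    and E_minus_2F: "(a^2 - c^2) - 2*(b^2 - c^2) = -(2*b^2 - a^2 - c^2)"
    and two_E_minus_F: "2*(a^2 - c^2) - (b^2 - c^2) = 2*a^2 - b^2 - c^2"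
    by (simp_all add: algebra_simps)
  have "N * (- x)^3 / (y * (- z) * w) = N * x^3 / (y * z * w)" for N x y z w :: real
    by simp
  then have "(a^2 - c^2)^3*(-(2*b^2 - a^2 - c^2))^3 / (a^2*(a^2 - b^2)*(a^2 + b^2 - 2*c^2)^3) = X"
    unfolding X_def minus_diff_eq[of "b^2" "a^2", symmetric] .
  moreover note ellipse_astroid_inter_transversal[of a b "a^2 - c^2" "b^2 - c^2",
      unfolded E_minus_F E_plus_F E_minus_2F two_E_minus_F]
  ultimately show "ellipse_set ((a^2 - c^2)/a) ((b^2 - c^2)/b) \<inter> astroid_set ((a^2 - b^2)/a) ((a^2 - b^2)/b) =
           {(x, y). x^2 = X \<and> y^2 = Y}"
    and "X \<ge> 0" "Y \<ge> 0"
    using assms by (simp_all add: algebra_simps)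
qed

lemma ellipse_evolute_inter_tangent:
  fixes a b c :: real
  assumes "a > b" "b > c" "c > 0"
  defines "X \<equiv> (a^2 - b^2)^3 / (a^2*(a^2 - c^2))" and "Y \<equiv> (b^2 - c^2)^3 / (c^2*(a^2 - c^2))"
  shows "ellipse_set ((a^2 - b^2)/a) ((b^2 - c^2)/c) \<inter> astroid_set ((a^2 - c^2)/a) ((a^2 - c^2)/c) =
           {(x, y). x^2 = X \<and> y^2 = Y}"
    and "X \<ge> 0" "Y \<ge> 0"
proof -
  have "a^2 > b^2" "b^2 > c^2"
    using assms by (simp_all add: power_strict_mono)
  then have "ellipse_set ((a^2 - b^2)/a) ((c^2 - b^2)/c) = ellipse_set ((a^2 - b^2)/a) ((b^2 - c^2)/c)"
    using assms by (intro ellipse_set_cong_square) (simp_all add: power_divide power2_commute)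
  moreover have "(a^2 - b^2)*(c^2 - b^2) < 0"
    using \<open>a^2 > b^2\<close> \<open>b^2 > c^2\<close> by (simp add: mult_pos_neg)
  moreover have "(a^2 - b^2) - (c^2 - b^2) = a^2 - c^2" "-((c^2 - b^2)^3) = (b^2 - c^2)^3"
    by (simp_all add: power3_eq_cube algebra_simps)
  ultimately show "ellipse_set ((a^2 - b^2)/a) ((b^2 - c^2)/c) \<inter> astroid_set ((a^2 - c^2)/a) ((a^2 - c^2)/c) =
           {(x, y). x^2 = X \<and> y^2 = Y}"
    and "X \<ge> 0" "Y \<ge> 0"
    using ellipse_astroid_inter_tangent[of a c "a^2 - b^2" "c^2 - b^2"] assms by (simp_all add: X_def Y_def)
qed

lemma curves_as_plane_images:
  "curve (ellipse1 a b c) = (\<lambda>(x, y). (x, y, 0)) ` ellipse_set a b"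
  "curve (ellipse2 a b c) = (\<lambda>(x, z). (x, 0, z)) ` ellipse_set a c"
  "curve (ellipse3 a b c) = (\<lambda>(y, z). (0, y, z)) ` ellipse_set b c"
  "curve (astroida4 a b c) = (\<lambda>(x, y). (x, y, 0)) ` astroid_set ((a^2 - b^2)/a) ((a^2 - b^2)/b)"
  "curve (astroida5 a b c) = (\<lambda>(x, z). (x, 0, z)) ` astroid_set ((a^2 - c^2)/a) ((a^2 - c^2)/c)"
  "curve (astroida6 a b c) = (\<lambda>(y, z). (0, y, z)) ` astroid_set ((b^2 - c^2)/b) ((b^2 - c^2)/c)"
  "curve (ellipse7 a b c) = (\<lambda>(x, y). (x, y, 0)) ` ellipse_set ((a^2 - c^2)/a) ((b^2 - c^2)/b)"
  "curve (ellipse8 a b c) = (\<lambda>(x, z). (x, 0, z)) ` ellipse_set ((a^2 - b^2)/a) ((b^2 - c^2)/c)"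
  "curve (ellipse9 a b c) = (\<lambda>(y, z). (0, y, z)) ` ellipse_set ((a^2 - b^2)/b) ((a^2 - c^2)/c)"
  by (simp_all add: curve_def ellipse_set_def astroid_set_def image_image ellipse1_def ellipse2_def
      ellipse3_def astroida4_def astroida5_def astroida6_def ellipse7_def ellipse8_def ellipse9_def)

lemma inj_coordinate_planes:
  "inj (\<lambda>(x, y). (x, y, 0 :: real))" "inj (\<lambda>(x, z). (x, 0 :: real, z))" "inj (\<lambda>(y, z). (0 :: real, y, z))"
  by (auto simp: inj_def)

lemma sign_combinations_as_plane_images:
  fixes X Y :: real
  assumes "X \<ge> 0" "Y \<ge> 0"
  shows "pm_xy (sqrt X) (sqrt Y) = (\<lambda>(x, y). (x, y, 0)) ` {(x, y). x^2 = X \<and> y^2 = Y}"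
    and "pm_xz (sqrt X) (sqrt Y) = (\<lambda>(x, z). (x, 0, z)) ` {(x, z). x^2 = X \<and> z^2 = Y}"
    and "pm_yz (sqrt X) (sqrt Y) = (\<lambda>(y, z). (0, y, z)) ` {(y, z). y^2 = X \<and> z^2 = Y}"
proof -
  have "x^2 = Z \<longleftrightarrow> x = sqrt Z \<or> x = - sqrt Z" if "Z \<ge> 0" for x Z :: real
    using that by (metis power2_eq_iff real_sqrt_pow2)
  then show "pm_xy (sqrt X) (sqrt Y) = (\<lambda>(x, y). (x, y, 0)) ` {(x, y). x^2 = X \<and> y^2 = Y}"
    and "pm_xz (sqrt X) (sqrt Y) = (\<lambda>(x, z). (x, 0, z)) ` {(x, z). x^2 = X \<and> z^2 = Y}"
    and "pm_yz (sqrt X) (sqrt Y) = (\<lambda>(y, z). (0, y, z)) ` {(y, z). y^2 = X \<and> z^2 = Y}"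
    using assms by (auto simp: pm_xy_def pm_xz_def pm_yz_def image_iff)
qed

lemmas plane_image_Int = image_Int[OF inj_coordinate_planes(1), symmetric]
  image_Int[OF inj_coordinate_planes(2), symmetric] image_Int[OF inj_coordinate_planes(3), symmetric]

lemma ellipse1_astroida4_inter:
  fixes a b c :: real
  assumes "a > b" "b > 0" "a^2 \<ge> 2*b^2"
  shows "curve (ellipse1 a b c) \<inter> curve (astroida4 a b c) =
    pm_xy (sqrt (a^4*(a^2 - 2*b^2)^3 / ((a^2 - b^2)*(a^2 + b^2)^3)))
          (sqrt (b^4*(2*a^2 - b^2)^3 / ((a^2 - b^2)*(a^2 + b^2)^3)))"
  unfolding curves_as_plane_images plane_image_Int ellipse_evolute_inter(1)[OF assms]
    sign_combinations_as_plane_images(1)[OF ellipse_evolute_inter(2,3)[OF assms]] ..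

lemma ellipse2_astroida5_inter:
  fixes a b c :: real
  assumes "a > c" "c > 0" "a^2 \<ge> 2*c^2"
  shows "curve (ellipse2 a b c) \<inter> curve (astroida5 a b c) =
    pm_xz (sqrt (a^4*(a^2 - 2*c^2)^3 / ((a^2 - c^2)*(a^2 + c^2)^3)))
          (sqrt (c^4*(2*a^2 - c^2)^3 / ((a^2 - c^2)*(a^2 + c^2)^3)))"
  unfolding curves_as_plane_images plane_image_Int ellipse_evolute_inter(1)[OF assms]
    sign_combinations_as_plane_images(2)[OF ellipse_evolute_inter(2,3)[OF assms]] ..

lemma ellipse3_astroida6_inter:
  fixes a b c :: real
  assumes "b > c" "c > 0" "b^2 \<ge> 2*c^2"
  shows "curve (ellipse3 a b c) \<inter> curve (astroida6 a b c) =
    pm_yz (sqrt (b^4*(b^2 - 2*c^2)^3 / ((b^2 - c^2)*(b^2 + c^2)^3)))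
          (sqrt (c^4*(2*b^2 - c^2)^3 / ((b^2 - c^2)*(b^2 + c^2)^3)))"
  unfolding curves_as_plane_images plane_image_Int ellipse_evolute_inter(1)[OF assms]
    sign_combinations_as_plane_images(3)[OF ellipse_evolute_inter(2,3)[OF assms]] ..

lemma astroida4_ellipse7_inter:
  fixes a b c :: real
  assumes "a > b" "b > c" "c > 0" "a^2 + c^2 \<ge> 2*b^2"
  shows "curve (astroida4 a b c) \<inter> curve (ellipse7 a b c) =
    pm_xy (sqrt ((a^2 - c^2)^3*(2*b^2 - a^2 - c^2)^3 / (a^2*(b^2 - a^2)*(a^2 + b^2 - 2*c^2)^3)))
          (sqrt ((b^2 - c^2)^3*(2*a^2 - b^2 - c^2)^3 / (b^2*(a^2 - b^2)*(a^2 + b^2 - 2*c^2)^3)))"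
proof -
  have "a^2 > b^2" "b^2 > c^2" "c^2 > 0"
    using assms by (simp_all add: power_strict_mono)
  then have hyps: "a \<noteq> 0" "b \<noteq> 0" "(a^2 - c^2)*(b^2 - c^2) > 0" "a^2 \<noteq> b^2"
    "(a^2 - c^2)*(a^2 + c^2 - 2*b^2) / ((a^2 - b^2)*(a^2 + b^2 - 2*c^2)) \<ge> 0"
    "(b^2 - c^2)*(2*a^2 - b^2 - c^2) / ((a^2 - b^2)*(a^2 + b^2 - 2*c^2)) \<ge> 0"
    using assms by (auto intro!: divide_nonneg_pos mult_nonneg_nonneg mult_pos_pos)
  show ?thesis
    unfolding curves_as_plane_images plane_image_Int Int_commute[of "astroid_set _ _"]
      ellipse_evolute_inter_shifted(1)[OF hyps]
      sign_combinations_as_plane_images(1)[OF ellipse_evolute_inter_shifted(2,3)[OF hyps]] ..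
qed

lemma astroida6_ellipse9_inter:
  fixes a b c :: real
  assumes "a > b" "b > c" "c > 0" "a^2 + c^2 \<le> 2*b^2"
  defines "Y \<equiv> (b^2 - a^2)^3*(2*c^2 - b^2 - a^2)^3 / (b^2*(c^2 - b^2)*(b^2 + c^2 - 2*a^2)^3)"
    and "Z \<equiv> (c^2 - a^2)^3*(2*b^2 - c^2 - a^2)^3 / (c^2*(b^2 - c^2)*(b^2 + c^2 - 2*a^2)^3)"
  shows "curve (astroida6 a b c) \<inter> curve (ellipse9 a b c) = pm_yz (sqrt Y) (sqrt Z)"
    and "Y \<ge> 0" "Z \<ge> 0"
proof -
  have "a^2 > b^2" "b^2 > c^2" "c^2 > 0"
    using assms by (simp_all add: power_strict_mono)
  then have hyps: "b \<noteq> 0" "c \<noteq> 0" "(b^2 - a^2)*(c^2 - a^2) > 0" "b^2 \<noteq> c^2"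
    "(b^2 - a^2)*(b^2 + a^2 - 2*c^2) / ((b^2 - c^2)*(b^2 + c^2 - 2*a^2)) \<ge> 0"
    "(c^2 - a^2)*(2*b^2 - c^2 - a^2) / ((b^2 - c^2)*(b^2 + c^2 - 2*a^2)) \<ge> 0"
    using assms by (auto intro!: divide_nonpos_neg mult_nonpos_nonneg mult_neg_neg mult_pos_neg)
  have flip: "ellipse_set ((a^2 - b^2)/b) ((a^2 - c^2)/c) = ellipse_set ((b^2 - a^2)/b) ((c^2 - a^2)/c)"
    using assms \<open>a^2 > b^2\<close> \<open>b^2 > c^2\<close>
    by (intro ellipse_set_cong_square) (simp_all add: power_divide power2_commute)
  show "Y \<ge> 0" "Z \<ge> 0"
    unfolding Y_def Z_def by (rule ellipse_evolute_inter_shifted(2,3)[OF hyps])+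
  show "curve (astroida6 a b c) \<inter> curve (ellipse9 a b c) = pm_yz (sqrt Y) (sqrt Z)"
    unfolding curves_as_plane_images plane_image_Int Int_commute[of "astroid_set _ _"] flip Y_def Z_def
      ellipse_evolute_inter_shifted(1)[OF hyps]
      sign_combinations_as_plane_images(3)[OF ellipse_evolute_inter_shifted(2,3)[OF hyps]] ..
qed

lemma astroida5_ellipse8_inter:
  fixes a b c :: real
  assumes "a > b" "b > c" "c > 0"
  shows "curve (astroida5 a b c) \<inter> curve (ellipse8 a b c) =
    pm_xz (sqrt ((a^2 - b^2)^3 / (a^2*(a^2 - c^2)))) (sqrt ((b^2 - c^2)^3 / (c^2*(a^2 - c^2))))"
  unfolding curves_as_plane_images plane_image_Int Int_commute[of "astroid_set _ _"]
    ellipse_evolute_inter_tangent(1)[OF assms]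
    sign_combinations_as_plane_images(2)[OF ellipse_evolute_inter_tangent(2,3)[OF assms]] ..

lemma ellipse2_ellipse8_inter:
  fixes a b c :: real
  assumes "a > b" "b > c" "c > 0" "b^2 \<ge> 2*c^2"
  shows "curve (ellipse2 a b c) \<inter> curve (ellipse8 a b c) =
    pm_xz (sqrt (a^2*(a^2 - b^2)^2*(2*c^2 - b^2) / ((a^2 - c^2)*(2*a^2*c^2 - a^2*b^2 - b^2*c^2))))
          (sqrt (c^2*(c^2 - b^2)^2*(2*a^2 - b^2) / ((c^2 - a^2)*(2*a^2*c^2 - a^2*b^2 - b^2*c^2))))"
proof -
  have "a^2 > b^2" "b^2 > c^2" "c^2 > 0"
    using assms by (simp_all add: power_strict_mono)
  then have signs: "a^2 - b^2 > 0" "b^2 - c^2 > 0" "a^2 - c^2 > 0" "2*a^2 - b^2 > 0"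
    by linarith+
  have K: "2*a^2*c^2 - a^2*b^2 - b^2*c^2 < 0"
  proof -
    have "a^2*(2*c^2) \<le> a^2*b^2" "b^2*c^2 > 0"
      using assms \<open>c^2 > 0\<close> by simp_all
    then show ?thesis
      by simp
  qed
  have denominators: "2*a^2*c^2 - a^2*b^2 - c^2*b^2 = 2*a^2*c^2 - a^2*b^2 - b^2*c^2"
    "2*a^2*c^2 - c^2*b^2 - a^2*b^2 = 2*a^2*c^2 - a^2*b^2 - b^2*c^2"
    by (simp_all add: algebra_simps)
  have "ellipse_set ((a^2 - b^2)/a) ((c^2 - b^2)/c) = ellipse_set ((a^2 - b^2)/a) ((b^2 - c^2)/c)"
    using assms by (intro ellipse_set_cong_square) (simp_all add: power_divide power2_commute)
  moreover have "a^2*(a^2 - b^2)^2*(2*c^2 - b^2) / ((a^2 - c^2)*(2*a^2*c^2 - a^2*b^2 - b^2*c^2)) \<ge> 0"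
    using assms K signs by (intro divide_nonpos_neg mult_nonneg_nonpos mult_pos_neg) auto
  moreover have "c^2*(c^2 - b^2)^2*(2*a^2 - b^2) / ((c^2 - a^2)*(2*a^2*c^2 - a^2*b^2 - b^2*c^2)) \<ge> 0"
    using assms K signs by (intro divide_nonneg_pos mult_nonneg_nonneg mult_neg_neg) auto
  moreover have "ellipse_set a c \<inter> ellipse_set ((a^2 - b^2)/a) ((c^2 - b^2)/c) =
      {(x, z). x^2 = a^2*(a^2 - b^2)^2*(2*c^2 - b^2) / ((a^2 - c^2)*(2*a^2*c^2 - a^2*b^2 - b^2*c^2)) \<and>
               z^2 = c^2*(c^2 - b^2)^2*(2*a^2 - b^2) / ((c^2 - a^2)*(2*a^2*c^2 - a^2*b^2 - b^2*c^2))}"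
    using ellipse_pencil_inter[of a c "b^2", unfolded denominators] assms signs K by auto
  ultimately show ?thesis
    unfolding curves_as_plane_images plane_image_Int by (simp add: sign_combinations_as_plane_images)
qed

lemma ellipse3_ellipse9_inter:
  fixes a b c :: real
  assumes "a > b" "b > c" "c > 0" "2*b^2 \<ge> a^2" "a^2 \<ge> 2*c^2"
  shows "curve (ellipse3 a b c) \<inter> curve (ellipse9 a b c) =
    pm_yz (sqrt (b^2*(b^2 - a^2)^2*(2*c^2 - a^2) / ((b^2 - c^2)*(2*b^2*c^2 - a^2*b^2 - a^2*c^2))))
          (sqrt (c^2*(c^2 - a^2)^2*(2*b^2 - a^2) / ((c^2 - b^2)*(2*b^2*c^2 - a^2*b^2 - a^2*c^2))))"
proof -
  have "a^2 > b^2" "b^2 > c^2" "c^2 > 0"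
    using assms by (simp_all add: power_strict_mono)
  then have signs: "a^2 - b^2 > 0" "b^2 - c^2 > 0" "a^2 - c^2 > 0"
    by linarith+
  have K: "2*b^2*c^2 - a^2*b^2 - a^2*c^2 < 0"
  proof -
    have "b^2*c^2 < a^2*b^2"
      using \<open>a^2 > b^2\<close> \<open>b^2 > c^2\<close> \<open>c^2 > 0\<close> by (intro mult_strict_mono) auto
    moreover have "b^2*c^2 < a^2*c^2"
      using \<open>a^2 > b^2\<close> \<open>c^2 > 0\<close> by (intro mult_strict_right_mono) auto
    ultimately show ?thesis
      by simp
  qed
  have denominators: "2*b^2*c^2 - b^2*a^2 - c^2*a^2 = 2*b^2*c^2 - a^2*b^2 - a^2*c^2"
    "2*b^2*c^2 - c^2*a^2 - b^2*a^2 = 2*b^2*c^2 - a^2*b^2 - a^2*c^2"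
    by (simp_all add: algebra_simps)
  have "ellipse_set ((b^2 - a^2)/b) ((c^2 - a^2)/c) = ellipse_set ((a^2 - b^2)/b) ((a^2 - c^2)/c)"
    using assms signs by (intro ellipse_set_cong_square) (simp_all add: power_divide power2_commute)
  moreover have "b^2*(b^2 - a^2)^2*(2*c^2 - a^2) / ((b^2 - c^2)*(2*b^2*c^2 - a^2*b^2 - a^2*c^2)) \<ge> 0"
    using assms K signs by (intro divide_nonpos_neg mult_nonneg_nonpos mult_pos_neg) auto
  moreover have "c^2*(c^2 - a^2)^2*(2*b^2 - a^2) / ((c^2 - b^2)*(2*b^2*c^2 - a^2*b^2 - a^2*c^2)) \<ge> 0"
    using assms K signs by (intro divide_nonneg_pos mult_nonneg_nonneg mult_neg_neg) auto
  moreover have "ellipse_set b c \<inter> ellipse_set ((b^2 - a^2)/b) ((c^2 - a^2)/c) =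
      {(y, z). y^2 = b^2*(b^2 - a^2)^2*(2*c^2 - a^2) / ((b^2 - c^2)*(2*b^2*c^2 - a^2*b^2 - a^2*c^2)) \<and>
               z^2 = c^2*(c^2 - a^2)^2*(2*b^2 - a^2) / ((c^2 - b^2)*(2*b^2*c^2 - a^2*b^2 - a^2*c^2))}"
    using ellipse_pencil_inter[of b c "a^2", unfolded denominators] assms signs K by auto
  ultimately show ?thesis
    unfolding curves_as_plane_images plane_image_Int by (simp add: sign_combinations_as_plane_images)
qed

lemma ellipse1_ellipse7_pencil_denominator_pos:
  fixes a b c :: real
  assumes "a > b" "b > c" "c > 0"
  shows "2*a^2*b^2 - a^2*c^2 - b^2*c^2 > 0"
proof -
  have "a^2 > b^2" "b^2 > c^2" "c^2 > 0"
    using assms by (simp_all add: power_strict_mono)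
  have "a^2*c^2 < a^2*b^2"
    using \<open>a^2 > b^2\<close> \<open>b^2 > c^2\<close> \<open>c^2 > 0\<close> by (intro mult_strict_left_mono) auto
  moreover have "b^2*c^2 < a^2*b^2"
    using \<open>a^2 > b^2\<close> \<open>b^2 > c^2\<close> \<open>c^2 > 0\<close> by (intro mult_strict_mono) auto
  ultimately show ?thesis
    by (simp add: mult.assoc)
qed

lemma ellipse1_ellipse7_pencil_y_neg:
  fixes a b c :: real
  assumes "a > b" "b > c" "c > 0"
  shows "b^2*(b^2 - c^2)^2*(2*a^2 - c^2) / ((b^2 - a^2)*(2*a^2*b^2 - b^2*c^2 - a^2*c^2)) < 0"
proof -
  have "a^2 > b^2" "b^2 > c^2" "c^2 > 0"
    using assms by (simp_all add: power_strict_mono)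
  moreover have "2*a^2 - c^2 > 0"
    using \<open>a^2 > b^2\<close> \<open>b^2 > c^2\<close> \<open>c^2 > 0\<close> by linarith
  ultimately show ?thesis
    using ellipse1_ellipse7_pencil_denominator_pos[OF assms]
    by (intro divide_pos_neg mult_pos_pos mult_neg_pos) auto
qed

lemma ellipse1_ellipse7_disjoint:
  fixes a b c :: real
  assumes "a > b" "b > c" "c > 0"
  shows "curve (ellipse1 a b c) \<inter> curve (ellipse7 a b c) = {}"
proof -
  have "a^2 > b^2" "b^2 > c^2"
    using assms by (simp_all add: power_strict_mono)
  then have "ellipse_set a b \<inter> ellipse_set ((a^2 - c^2)/a) ((b^2 - c^2)/b) =
      {(x, y). x^2 = a^2*(a^2 - c^2)^2*(2*b^2 - c^2) / ((a^2 - b^2)*(2*a^2*b^2 - a^2*c^2 - b^2*c^2)) \<and>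
               y^2 = b^2*(b^2 - c^2)^2*(2*a^2 - c^2) / ((b^2 - a^2)*(2*a^2*b^2 - b^2*c^2 - a^2*c^2))}"
    using assms ellipse1_ellipse7_pencil_denominator_pos[OF assms] by (intro ellipse_pencil_inter) auto
  also have "\<dots> = {}"
    using ellipse1_ellipse7_pencil_y_neg[OF assms] by auto (metis not_less zero_le_power2)
  finally show ?thesis
    unfolding curves_as_plane_images plane_image_Int by simp
qed

lemma ellipse1_ellipse7_complex_common_points:
  fixes a b c :: real and x y :: complex
  assumes "a > b" "b > c" "c > 0"
  shows "(x^2 / (complex_of_real a)^2 + y^2 / (complex_of_real b)^2 = 1
           \<and> (complex_of_real a)^2 * x^2 / (complex_of_real (a^2 - c^2))^2
             + (complex_of_real b)^2 * y^2 / (complex_of_real (b^2 - c^2))^2 = 1)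
         \<longleftrightarrow> (x^2 = complex_of_real (a^2*(a^2 - c^2)^2*(2*b^2 - c^2) / ((a^2 - b^2)*(2*a^2*b^2 - a^2*c^2 - b^2*c^2)))
            \<and> y^2 = complex_of_real (b^2*(b^2 - c^2)^2*(2*a^2 - c^2) / ((b^2 - a^2)*(2*a^2*b^2 - b^2*c^2 - a^2*c^2))))"
proof -
  have "a^2 > b^2" "b^2 > c^2" "c^2 > 0"
    using assms by (simp_all add: power_strict_mono)
  have "complex_of_real (2*a^2*b^2 - a^2*c^2 - b^2*c^2)
      = 2 * complex_of_real (a^2) * complex_of_real (b^2) - complex_of_real (a^2) * complex_of_real (c^2)
        - complex_of_real (b^2) * complex_of_real (c^2)"
    by simp
  then have "2 * complex_of_real (a^2) * complex_of_real (b^2) - complex_of_real (a^2) * complex_of_real (c^2)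
        - complex_of_real (b^2) * complex_of_real (c^2) \<noteq> 0"
    using ellipse1_ellipse7_pencil_denominator_pos[OF assms] by (metis of_real_eq_0_iff less_irrefl)
  moreover have "complex_of_real (a^2) \<noteq> 0" "complex_of_real (b^2) \<noteq> 0" "complex_of_real (c^2) \<noteq> 0"
    "complex_of_real (a^2) \<noteq> complex_of_real (b^2)" "complex_of_real (a^2) \<noteq> complex_of_real (c^2)"
    "complex_of_real (b^2) \<noteq> complex_of_real (c^2)"
    using \<open>a^2 > b^2\<close> \<open>b^2 > c^2\<close> \<open>c^2 > 0\<close> by (simp_all only: of_real_eq_iff of_real_eq_0_iff)
  ultimately show ?thesis
    using conic_pencil_solution[of "complex_of_real (a^2)" "complex_of_real (b^2)" "complex_of_real (c^2)" "x^2" "y^2"]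
    by simp
qed

section \<open>Comparing the intersection points\<close>

text \<open>Ellipse 2 against Ellipse 8 and Astroida 5 is the case (P, Q, R) = (a^2, c^2, b^2);
  Ellipse 3 against Ellipse 9 and Astroida 6 is the case (b^2, c^2, a^2).\<close>

lemma evolute_pencil_gap:
  fixes P Q R :: real
  assumes "P \<noteq> Q" "P + Q \<noteq> 0" "P*R + Q*R - 2*P*Q \<noteq> 0"
  defines "g \<equiv> P*(R*(P + Q) - 3*P*Q)^2 * (2*P^2 + 2*Q^2 - 2*P*Q - P*R - Q*R)
                 / ((P - Q)*(P + Q)^3*(P*R + Q*R - 2*P*Q))"
    and "h \<equiv> Q*(R*(P + Q) - 3*P*Q)^2 * (2*P^2 + 2*Q^2 - 2*P*Q - P*R - Q*R)
                 / ((P - Q)*(P + Q)^3*(P*R + Q*R - 2*P*Q))"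
  shows "P^2*(P - 2*Q)^3 / ((P - Q)*(P + Q)^3) - P*(P - R)^2*(2*Q - R) / ((P - Q)*(2*P*Q - P*R - Q*R)) = g"
    and "Q*(Q - R)^2*(2*P - R) / ((Q - P)*(2*P*Q - Q*R - P*R)) - Q^2*(2*P - Q)^3 / ((P - Q)*(P + Q)^3) = h"
proof -
  define L where "L = P*R + Q*R - 2*P*Q"
  have nz: "P - Q \<noteq> 0" "Q - P \<noteq> 0" "L \<noteq> 0"
    using assms by (auto simp: L_def)
  have pencil: "(P - Q)*(2*P*Q - P*R - Q*R) = - ((P - Q)*L)" "(Q - P)*(2*P*Q - Q*R - P*R) = (P - Q)*L"
    by (simp_all add: L_def algebra_simps)
  have sum_frac: "x/(D*M) + y/(D*N) = (x*N + y*M)/(D*M*N)"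
    and diff_frac: "y/(D*N) - x/(D*M) = (y*M - x*N)/(D*M*N)"
    if "D \<noteq> 0" "M \<noteq> 0" "N \<noteq> 0" for x y D M N :: real
    using that by (simp_all add: field_simps)
  have "P^2*(P - 2*Q)^3*L + P*(P - R)^2*(2*Q - R)*(P + Q)^3
      = P*(R*(P + Q) - 3*P*Q)^2 * (2*P^2 + 2*Q^2 - 2*P*Q - P*R - Q*R)"
    "Q*(Q - R)^2*(2*P - R)*(P + Q)^3 - Q^2*(2*P - Q)^3*L
      = Q*(R*(P + Q) - 3*P*Q)^2 * (2*P^2 + 2*Q^2 - 2*P*Q - P*R - Q*R)"
    by (simp_all add: L_def algebra_simps power2_eq_square power3_eq_cube)
  moreover have "(P + Q)^3 \<noteq> 0"
    using assms by simp
  ultimately show "P^2*(P - 2*Q)^3 / ((P - Q)*(P + Q)^3) - P*(P - R)^2*(2*Q - R) / ((P - Q)*(2*P*Q - P*R - Q*R)) = g"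
    and "Q*(Q - R)^2*(2*P - R) / ((Q - P)*(2*P*Q - Q*R - P*R)) - Q^2*(2*P - Q)^3 / ((P - Q)*(P + Q)^3) = h"
    unfolding g_def h_def pencil L_def[symmetric] using nz
    by (simp_all add: sum_frac diff_frac)
qed

lemma evolute_pencil_order:
  fixes P Q R :: real
  assumes "P > Q" "Q > 0" "P*R + Q*R - 2*P*Q > 0"
  defines "evx \<equiv> P^2*(P - 2*Q)^3 / ((P - Q)*(P + Q)^3)"
    and "penx \<equiv> P*(P - R)^2*(2*Q - R) / ((P - Q)*(2*P*Q - P*R - Q*R))"
    and "evz \<equiv> Q^2*(2*P - Q)^3 / ((P - Q)*(P + Q)^3)"
    and "penz \<equiv> Q*(Q - R)^2*(2*P - R) / ((Q - P)*(2*P*Q - Q*R - P*R))"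
    and "G \<equiv> 2*P^2 + 2*Q^2 - 2*P*Q - P*R - Q*R"
  shows "R*(P + Q) = 3*P*Q \<Longrightarrow> evx = penx \<and> evz = penz"
    and "R*(P + Q) \<noteq> 3*P*Q \<Longrightarrow> (penx \<le> evx \<longleftrightarrow> 0 \<le> G) \<and> (evz \<le> penz \<longleftrightarrow> 0 \<le> G)"
proof -
  define den where "den = (P - Q)*(P + Q)^3*(P*R + Q*R - 2*P*Q)"
  have "den > 0"
    using assms(1-3) by (simp add: den_def)
  have gap: "evx - penx = (P*(R*(P + Q) - 3*P*Q)^2 / den) * G"
    "penz - evz = (Q*(R*(P + Q) - 3*P*Q)^2 / den) * G"
    using evolute_pencil_gap[of P Q R] assms(1-3)
    unfolding evx_def penx_def evz_def penz_def G_def den_def by simp_all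
  show "R*(P + Q) = 3*P*Q \<Longrightarrow> evx = penx \<and> evz = penz"
    using gap by simp
  have scaled: "y \<le> x \<longleftrightarrow> 0 \<le> G" if "x - y = k * G" "k > 0" for x y k
  proof -
    have "y \<le> x \<longleftrightarrow> 0 \<le> k * G"
      unfolding that(1)[symmetric] by simp
    then show ?thesis
      using that(2) by (simp add: zero_le_mult_iff)
  qed
  assume "R*(P + Q) \<noteq> 3*P*Q"
  then have "P*(R*(P + Q) - 3*P*Q)^2 / den > 0" "Q*(R*(P + Q) - 3*P*Q)^2 / den > 0"
    using assms(1,2) \<open>den > 0\<close> by simp_all
  then show "(penx \<le> evx \<longleftrightarrow> 0 \<le> G) \<and> (evz \<le> penz \<longleftrightarrow> 0 \<le> G)"
    using scaled gap by blast
qed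

lemma ellipse2_ellipse8_vs_astroida5:
  fixes a b c :: real
  assumes "a > b" "b > c" "c > 0" "b^2 \<ge> 2*c^2"
  defines "X3 \<equiv> a^2*(a^2 - b^2)^2*(2*c^2 - b^2) / ((a^2 - c^2)*(2*a^2*c^2 - a^2*b^2 - b^2*c^2))"
    and "Z3 \<equiv> c^2*(c^2 - b^2)^2*(2*a^2 - b^2) / ((c^2 - a^2)*(2*a^2*c^2 - a^2*b^2 - b^2*c^2))"
    and "X1 \<equiv> a^4*(a^2 - 2*c^2)^3 / ((a^2 - c^2)*(a^2 + c^2)^3)"
    and "Z1 \<equiv> c^4*(2*a^2 - c^2)^3 / ((a^2 - c^2)*(a^2 + c^2)^3)"
  shows "sqrt X1 \<ge> sqrt X3" "sqrt Z1 \<le> sqrt Z3"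
    and "1/a^2 + 1/c^2 = 3/b^2 \<Longrightarrow> sqrt X1 = sqrt X3"
    and "1/a^2 + 1/c^2 = 3/b^2 \<Longrightarrow> sqrt Z1 = sqrt Z3"
proof -
  define A B C where "A = a^2" and "B = b^2" and "C = c^2"
  have "A > B" "B > C" "C > 0" "B \<ge> 2*C"
    using assms by (simp_all add: A_def B_def C_def power_strict_mono)
  have "A > C"
    using \<open>A > B\<close> \<open>B > C\<close> by simp
  have "A*(2*C) \<le> A*B" "C*B > 0"
    using \<open>A > B\<close> \<open>B > C\<close> \<open>C > 0\<close> \<open>B \<ge> 2*C\<close> by simp_all
  then have "A*B + C*B - 2*A*C > 0"
    by simp
  note order = evolute_pencil_order[OF \<open>A > C\<close> \<open>C > 0\<close> this]
  have "(A - C)*(A - 2*C) > 0" "(A + C)*B < (A + C)*A"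
    using \<open>A > B\<close> \<open>B > C\<close> \<open>C > 0\<close> \<open>B \<ge> 2*C\<close> by simp_all
  then have "2*A^2 + 2*C^2 - 2*A*C - A*B - C*B > 0"
    by (simp add: algebra_simps power2_eq_square)
  have "a^4 = A^2" "c^4 = C^2"
    by (simp_all add: A_def C_def flip: power_mult)
  then have conv: "X1 = A^2*(A - 2*C)^3 / ((A - C)*(A + C)^3)"
    "Z1 = C^2*(2*A - C)^3 / ((A - C)*(A + C)^3)"
    "X3 = A*(A - B)^2*(2*C - B) / ((A - C)*(2*A*C - A*B - C*B))"
    "Z3 = C*(C - B)^2*(2*A - B) / ((C - A)*(2*A*C - C*B - A*B))"
    by (simp_all add: X1_def Z1_def X3_def Z3_def A_def B_def C_def algebra_simps)
  have "X3 \<le> X1 \<and> Z1 \<le> Z3"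
    unfolding conv using order \<open>2*A^2 + 2*C^2 - 2*A*C - A*B - C*B > 0\<close>
    by (cases "B*(A + C) = 3*A*C") auto
  moreover have "1/a^2 + 1/c^2 = 3/b^2 \<Longrightarrow> X1 = X3 \<and> Z1 = Z3"
    unfolding conv using order(1) \<open>A > B\<close> \<open>B > C\<close> \<open>C > 0\<close>
    by (simp add: field_simps flip: A_def B_def C_def)
  ultimately show "sqrt X1 \<ge> sqrt X3" "sqrt Z1 \<le> sqrt Z3"
    and "1/a^2 + 1/c^2 = 3/b^2 \<Longrightarrow> sqrt X1 = sqrt X3"
    and "1/a^2 + 1/c^2 = 3/b^2 \<Longrightarrow> sqrt Z1 = sqrt Z3"
    by auto
qed

lemma ellipse3_ellipse9_vs_astroida6:
  fixes a b c :: real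
  assumes "a > b" "b > c" "c > 0" "b^2 \<ge> 2*c^2"
  defines "Y4 \<equiv> b^2*(b^2 - a^2)^2*(2*c^2 - a^2) / ((b^2 - c^2)*(2*b^2*c^2 - a^2*b^2 - a^2*c^2))"
    and "Z4 \<equiv> c^2*(c^2 - a^2)^2*(2*b^2 - a^2) / ((c^2 - b^2)*(2*b^2*c^2 - a^2*b^2 - a^2*c^2))"
    and "Y2 \<equiv> b^4*(b^2 - 2*c^2)^3 / ((b^2 - c^2)*(b^2 + c^2)^3)"
    and "Z2 \<equiv> c^4*(2*b^2 - c^2)^3 / ((b^2 - c^2)*(b^2 + c^2)^3)"
  shows "(sqrt Y2 \<ge> sqrt Y4 \<and> sqrt Z2 \<le> sqrt Z4) \<longleftrightarrow>
         2*b^4 + 2*c^4 - a^2*b^2 - a^2*c^2 - 2*b^2*c^2 \<ge> 0"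
proof -
  define A B C where "A = a^2" and "B = b^2" and "C = c^2"
  have "A > B" "B > C" "C > 0" "B \<ge> 2*C"
    using assms by (simp_all add: A_def B_def C_def power_strict_mono)
  have "B*A > B*C" "C*A > C*B"
    using \<open>A > B\<close> \<open>B > C\<close> \<open>C > 0\<close> by simp_all
  then have "B*A + C*A - 2*B*C > 0"
    by (simp add: algebra_simps)
  note order = evolute_pencil_order(2)[OF \<open>B > C\<close> \<open>C > 0\<close> this]
  have "A*(B + C) > B*(B + C)"
    using \<open>A > B\<close> \<open>B > C\<close> \<open>C > 0\<close> by (intro mult_strict_right_mono) auto
  moreover have "B*(B + C) \<ge> 3*B*C"
    using \<open>B > C\<close> \<open>C > 0\<close> \<open>B \<ge> 2*C\<close> by (simp add: algebra_simps power2_eq_square)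
  ultimately have "A*(B + C) \<noteq> 3*B*C"
    by simp
  have "b^4 = B^2" "c^4 = C^2"
    by (simp_all add: B_def C_def flip: power_mult)
  then have conv: "Y2 = B^2*(B - 2*C)^3 / ((B - C)*(B + C)^3)"
    "Z2 = C^2*(2*B - C)^3 / ((B - C)*(B + C)^3)"
    "Y4 = B*(B - A)^2*(2*C - A) / ((B - C)*(2*B*C - B*A - C*A))"
    "Z4 = C*(C - A)^2*(2*B - A) / ((C - B)*(2*B*C - C*A - B*A))"
    "2*b^4 + 2*c^4 - a^2*b^2 - a^2*c^2 - 2*b^2*c^2 = 2*B^2 + 2*C^2 - 2*B*C - B*A - C*A"
    by (simp_all add: Y2_def Z2_def Y4_def Z4_def A_def B_def C_def algebra_simps)
  show ?thesis
    unfolding conv using order \<open>A*(B + C) \<noteq> 3*B*C\<close> by simp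
qed

section \<open>Principal curvatures along the section y = 0\<close>

lemma weingarten_linear: "linear (weingarten a b c P)"
proof (rule linearI)
  fix u v :: pt3 and r :: real
  obtain u1 u2 u3 v1 v2 v3 n1 n2 n3 where
    "u = (u1, u2, u3)" "v = (v1, v2, v3)" "ell_normal a b c P = (n1, n2, n3)"
    by (metis prod.exhaust)
  then show "weingarten a b c P (u + v) = weingarten a b c P u + weingarten a b c P v"
    "weingarten a b c P (r *\<^sub>R v) = r *\<^sub>R weingarten a b c P v"
    by (simp_all add: weingarten_def Let_def add_divide_distrib algebra_simps)
qed

lemma weingarten_xz_section:
  fixes a b c X Z :: real
  assumes "a > 0" "b > 0" "c > 0" and on: "X^2/a^2 + Z^2/c^2 = 1"
  defines "n2 \<equiv> (X/a^2)^2 + (Z/c^2)^2"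
  shows "weingarten a b c (X, 0, Z) (0, 1, 0) = (1/(b^2 * sqrt n2)) *\<^sub>R (0, 1, 0)"
    and "weingarten a b c (X, 0, Z) (Z/c^2, 0, -X/a^2) =
           (1/(a^2*c^2*n2 * sqrt n2)) *\<^sub>R (Z/c^2, 0, -X/a^2)"
proof -
  have N: "ell_normal a b c (X, 0, Z) = (X/a^2, 0, Z/c^2)"
    by (simp add: ell_normal_def)
  have "norm (X/a^2, 0::real, Z/c^2) = sqrt n2" "(X/a^2, 0::real, Z/c^2) \<bullet> (X/a^2, 0, Z/c^2) = n2"
    by (simp_all add: n2_def norm_Pair power2_eq_square)
  then have W: "weingarten a b c (X, 0, Z) (v1, v2, v3) =
      (1/sqrt n2) *\<^sub>R ((v1/a^2, v2/b^2, v3/c^2)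
        - (((v1/a^2, v2/b^2, v3/c^2) \<bullet> (X/a^2, 0, Z/c^2)) / n2) *\<^sub>R (X/a^2, 0, Z/c^2))" for v1 v2 v3
    by (simp add: weingarten_def N)
  show "weingarten a b c (X, 0, Z) (0, 1, 0) = (1/(b^2 * sqrt n2)) *\<^sub>R (0, 1, 0)"
    unfolding W by simp
  have "c^2*X^2 + a^2*Z^2 = a^2*c^2"
    using on assms(1,3) by (simp add: field_simps)
  moreover have "n2 * (a^2*c^2)^2 = c^4*X^2 + a^4*Z^2"
    using assms(1,3) by (simp add: n2_def field_simps)
  moreover have "n2 > 0"
    using on assms(1,3) unfolding n2_def
    by (cases "X = 0") (auto intro: add_pos_nonneg)
  ultimately have
    "Z/c^2/a^2 - (Z/c^2/a^2 * (X/a^2) + - X/a^2/c^2 * (Z/c^2)) / n2 * (X/a^2) = Z/c^2 / (a^2*c^2*n2)"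
    "- X/a^2/c^2 - (Z/c^2/a^2 * (X/a^2) + - X/a^2/c^2 * (Z/c^2)) / n2 * (Z/c^2) = - X/a^2 / (a^2*c^2*n2)"
    using assms(1,3) by (simp_all add: field_simps) algebra+
  then show "weingarten a b c (X, 0, Z) (Z/c^2, 0, -X/a^2) =
           (1/(a^2*c^2*n2 * sqrt n2)) *\<^sub>R (Z/c^2, 0, -X/a^2)"
    unfolding W by simp
qed

lemma xz_section_tangent_decomp:
  fixes a c X Z :: real and v :: pt3
  assumes "a > 0" "c > 0" "X \<noteq> 0 \<or> Z \<noteq> 0" "v \<bullet> (X/a^2, 0, Z/c^2) = 0"
  obtains \<beta> where "v = fst (snd v) *\<^sub>R (0, 1, 0) + \<beta> *\<^sub>R (Z/c^2, 0, -X/a^2)"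
proof -
  obtain v1 v2 v3 where v: "v = (v1, v2, v3)"
    by (cases v) auto
  define n2 where "n2 = (X/a^2)^2 + (Z/c^2)^2"
  have "n2 > 0"
    using assms(1-3) by (auto simp: n2_def intro: add_pos_nonneg add_nonneg_pos)
  define \<beta> where "\<beta> = (v1*(Z/c^2) - v3*(X/a^2)) / n2"
  have normal: "v1*(X/a^2) + v3*(Z/c^2) = 0"
    using assms(4) by (simp add: v)
  have "v1 * n2 = (v1*(Z/c^2) - v3*(X/a^2))*(Z/c^2) + (v1*(X/a^2) + v3*(Z/c^2))*(X/a^2)"
    and "v3 * n2 = (v1*(Z/c^2) - v3*(X/a^2))*(- X/a^2) + (v1*(X/a^2) + v3*(Z/c^2))*(Z/c^2)"
    by (simp_all add: n2_def algebra_simps power2_eq_square)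
  then have "v1 * n2 = (v1*(Z/c^2) - v3*(X/a^2))*(Z/c^2)" "v3 * n2 = (v1*(Z/c^2) - v3*(X/a^2))*(- X/a^2)"
    unfolding normal by simp_all
  then have "v1 = \<beta> * (Z/c^2)" "v3 = \<beta> * (- X/a^2)"
    using \<open>n2 > 0\<close> assms(1,2) unfolding \<beta>_def by (simp_all add: field_simps)
  then show ?thesis
    by (intro that[of \<beta>]) (simp add: v)
qed

lemma principal_curvatures_xz_section:
  fixes a b c X Z :: real
  assumes "a > 0" "b > 0" "c > 0" and on: "X^2/a^2 + Z^2/c^2 = 1"
  defines "n2 \<equiv> (X/a^2)^2 + (Z/c^2)^2"
  shows "principal_curvatures a b c (X, 0, Z) = {1/(b^2 * sqrt n2), 1/(a^2*c^2*n2 * sqrt n2)}"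
proof -
  define ky kt where "ky = 1/(b^2 * sqrt n2)" and "kt = 1/(a^2*c^2*n2 * sqrt n2)"
  define T where "T = (Z/c^2, 0::real, -X/a^2)"
  have N: "ell_normal a b c (X, 0, Z) = (X/a^2, 0, Z/c^2)"
    by (simp add: ell_normal_def)
  have "X \<noteq> 0 \<or> Z \<noteq> 0"
    using on by auto
  then have "T \<noteq> 0"
    using assms(1,3) by (auto simp: T_def zero_prod_def)
  have eigen: "weingarten a b c (X, 0, Z) (0, 1, 0) = ky *\<^sub>R (0, 1, 0)"
    "weingarten a b c (X, 0, Z) T = kt *\<^sub>R T"
    using weingarten_xz_section[OF assms(1-4)] unfolding ky_def kt_def T_def n2_def by simp_all
  have tangent: "(0, 1, 0) \<bullet> ell_normal a b c (X, 0, Z) = 0" "T \<bullet> ell_normal a b c (X, 0, Z) = 0"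
    by (simp_all add: N T_def)
  show ?thesis
    unfolding ky_def[symmetric] kt_def[symmetric]
  proof (intro equalityI subsetI)
    fix k assume "k \<in> principal_curvatures a b c (X, 0, Z)"
    then obtain v where v: "v \<noteq> 0" "v \<bullet> ell_normal a b c (X, 0, Z) = 0"
      "weingarten a b c (X, 0, Z) v = k *\<^sub>R v"
      unfolding principal_curvatures_def by blast
    define v2 where "v2 = fst (snd v)"
    obtain \<beta> where decomp: "v = v2 *\<^sub>R (0, 1, 0) + \<beta> *\<^sub>R T"
      using xz_section_tangent_decomp[OF assms(1,3) \<open>X \<noteq> 0 \<or> Z \<noteq> 0\<close>] v(2)
      unfolding N T_def v2_def by blast
    have "weingarten a b c (X, 0, Z) v = v2 *\<^sub>R (ky *\<^sub>R (0, 1, 0)) + \<beta> *\<^sub>R (kt *\<^sub>R T)"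
      unfolding decomp linear_add[OF weingarten_linear] linear_scale[OF weingarten_linear] eigen ..
    then have "k *\<^sub>R (v2 *\<^sub>R (0, 1, 0) + \<beta> *\<^sub>R T) = v2 *\<^sub>R (ky *\<^sub>R (0, 1, 0)) + \<beta> *\<^sub>R (kt *\<^sub>R T)"
      using v(3) decomp by simp
    then have "k * v2 = ky * v2" "(k*\<beta> - kt*\<beta>) * (Z/c^2) = 0" "(k*\<beta> - kt*\<beta>) * (X/a^2) = 0"
      by (auto simp: T_def algebra_simps)
    moreover have "v2 \<noteq> 0 \<or> \<beta> \<noteq> 0"
      using v(1) decomp by (auto simp: zero_prod_def)
    ultimately show "k \<in> {ky, kt}"
      using \<open>X \<noteq> 0 \<or> Z \<noteq> 0\<close> assms(1,3) by auto
  next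
    fix k assume "k \<in> {ky, kt}"
    moreover have "(0::real, 1::real, 0::real) \<noteq> 0"
      by (simp add: zero_prod_def)
    ultimately show "k \<in> principal_curvatures a b c (X, 0, Z)"
      using eigen tangent \<open>T \<noteq> 0\<close> unfolding principal_curvatures_def by blast
  qed
qed

lemma curvature_centers_xz_section:
  fixes a b c X Z :: real
  assumes "a > 0" "b > 0" "c > 0" and on: "X^2/a^2 + Z^2/c^2 = 1"
  defines "n2 \<equiv> (X/a^2)^2 + (Z/c^2)^2"
  shows "curvature_center a b c (X, 0, Z) (1/(b^2 * sqrt n2)) = (X - b^2*X/a^2, 0, Z - b^2*Z/c^2)"
    and "curvature_center a b c (X, 0, Z) (1/(a^2*c^2*n2 * sqrt n2)) = (X - c^2*n2*X, 0, Z - a^2*n2*Z)"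
proof -
  have "X \<noteq> 0 \<or> Z \<noteq> 0"
    using on by auto
  then have "n2 > 0"
    using assms(1,3) by (auto simp: n2_def intro: add_pos_nonneg add_nonneg_pos)
  moreover have "norm (ell_normal a b c (X, 0, Z)) = sqrt n2"
    by (simp add: ell_normal_def norm_Pair n2_def power_divide)
  ultimately show "curvature_center a b c (X, 0, Z) (1/(b^2 * sqrt n2)) = (X - b^2*X/a^2, 0, Z - b^2*Z/c^2)"
    and "curvature_center a b c (X, 0, Z) (1/(a^2*c^2*n2 * sqrt n2)) = (X - c^2*n2*X, 0, Z - a^2*n2*Z)"
    using assms(1,3) by (simp_all add: curvature_center_def ell_normal_def)
qed

text \<open>The sign in (a cos t, 0, -c sin t) makes both centres of curvature of this point
  carry the same parameter t on Astroida 5 and on Ellipse 8.\<close>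

lemma meridian_curvature_centers:
  fixes a b c t :: real
  assumes "a > b" "b > c" "c > 0"
  defines "P \<equiv> (a * cos t, 0, - c * sin t)" and "n2 \<equiv> (cos t)^2/a^2 + (sin t)^2/c^2"
  shows "P \<in> ellipsoid a b c"
    and "principal_curvatures a b c P = {1/(b^2 * sqrt n2), 1/(a^2*c^2*n2 * sqrt n2)}"
    and "curvature_center a b c P (1/(b^2 * sqrt n2)) = ellipse8 a b c t"
    and "curvature_center a b c P (1/(a^2*c^2*n2 * sqrt n2)) = astroida5 a b c t"
proof -
  have "a > 0" "b > 0"
    using assms by auto
  have on: "(a * cos t)^2/a^2 + (- c * sin t)^2/c^2 = 1"
    using \<open>a > 0\<close> assms(3) by (simp add: power_mult_distrib)
  then show "P \<in> ellipsoid a b c"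
    by (simp add: P_def ellipsoid_def ellq_def)
  have n2: "n2 = (a * cos t/a^2)^2 + (- c * sin t/c^2)^2"
    using \<open>a > 0\<close> assms(3) by (simp add: n2_def power_mult_distrib power2_eq_square)
  note xz = principal_curvatures_xz_section[OF \<open>a > 0\<close> \<open>b > 0\<close> assms(3) on, folded n2]
    curvature_centers_xz_section[OF \<open>a > 0\<close> \<open>b > 0\<close> assms(3) on, folded n2]
  show "principal_curvatures a b c P = {1/(b^2 * sqrt n2), 1/(a^2*c^2*n2 * sqrt n2)}"
    using xz(1) by (simp add: P_def)
  show "curvature_center a b c P (1/(b^2 * sqrt n2)) = ellipse8 a b c t"
    using xz(2) \<open>a > 0\<close> assms(3)
    by (simp add: P_def ellipse8_def field_simps power2_eq_square)
  have f: "1 - c^2*n2 = (a^2 - c^2)/a^2 * (cos t)^2" "1 - a^2*n2 = - (a^2 - c^2)/c^2 * (sin t)^2"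
    using \<open>a > 0\<close> assms(3) by (simp add: n2_def field_simps sin_squared_eq,
        simp add: n2_def field_simps cos_squared_eq)
  have "a * cos t - c^2*n2*(a * cos t) = a * cos t * ((a^2 - c^2)/a^2 * (cos t)^2)"
    "- c * sin t - a^2*n2*(- c * sin t) = - c * sin t * (- (a^2 - c^2)/c^2 * (sin t)^2)"
    unfolding f[symmetric] by (simp_all add: algebra_simps)
  moreover have "a * cos t * ((a^2 - c^2)/a^2 * (cos t)^2) = (a^2 - c^2)/a * cos t ^ 3"
    and "- c * sin t * (- (a^2 - c^2)/c^2 * (sin t)^2) = (a^2 - c^2)/c * sin t ^ 3"
    using \<open>a > 0\<close> assms(3) by (simp_all add: field_simps power2_eq_square power3_eq_cube)
  ultimately show "curvature_center a b c P (1/(a^2*c^2*n2 * sqrt n2)) = astroida5 a b c t"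
    using xz(3) by (simp only: P_def astroida5_def mult.assoc)
qed

lemma meridian_curvature_order:
  fixes a b c t :: real
  assumes "a > b" "b > c" "c > 0"
  defines "n2 \<equiv> (cos t)^2/a^2 + (sin t)^2/c^2"
  shows "1/(a^2*c^2*n2 * sqrt n2) < 1/(b^2 * sqrt n2) \<longleftrightarrow> (a^2 - c^2) * (cos t)^2 < a^2 - b^2"
    and "1/(b^2 * sqrt n2) < 1/(a^2*c^2*n2 * sqrt n2) \<longleftrightarrow> (a^2 - c^2) * (cos t)^2 > a^2 - b^2"
proof -
  have "a > 0" "b > 0"
    using assms by auto
  have "n2 > 0"
    using sin_cos_squared_add[of t] assms(3) \<open>a > 0\<close> unfolding n2_def
    by (cases "cos t = 0") (auto intro: add_pos_nonneg)
  have recip: "1/x < 1/y \<longleftrightarrow> y < x" if "x > 0" "y > 0" for x y :: real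
    using that by (simp add: field_simps)
  have "b^2 * sqrt n2 > 0" "a^2*c^2*n2 * sqrt n2 > 0"
    using \<open>n2 > 0\<close> \<open>a > 0\<close> \<open>b > 0\<close> assms(3) by simp_all
  then have "1/(a^2*c^2*n2 * sqrt n2) < 1/(b^2 * sqrt n2) \<longleftrightarrow> b^2 < a^2*c^2*n2"
    "1/(b^2 * sqrt n2) < 1/(a^2*c^2*n2 * sqrt n2) \<longleftrightarrow> a^2*c^2*n2 < b^2"
    using \<open>n2 > 0\<close> by (simp_all add: recip mult.assoc)
  moreover have "a^2*c^2*n2 = c^2 * (cos t)^2 + a^2 * (1 - (cos t)^2)"
    using \<open>a > 0\<close> assms(3) by (simp add: n2_def field_simps sin_squared_eq)
  then have "b^2 < a^2*c^2*n2 \<longleftrightarrow> (a^2 - c^2) * (cos t)^2 < a^2 - b^2"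
    "a^2*c^2*n2 < b^2 \<longleftrightarrow> (a^2 - c^2) * (cos t)^2 > a^2 - b^2"
    by (simp_all only:) (simp_all add: algebra_simps)
  ultimately show "1/(a^2*c^2*n2 * sqrt n2) < 1/(b^2 * sqrt n2) \<longleftrightarrow> (a^2 - c^2) * (cos t)^2 < a^2 - b^2"
    and "1/(b^2 * sqrt n2) < 1/(a^2*c^2*n2 * sqrt n2) \<longleftrightarrow> (a^2 - c^2) * (cos t)^2 > a^2 - b^2"
    by simp_all
qed

lemma meridian_caustic_points:
  fixes a b c t :: real
  assumes "a > b" "b > c" "c > 0"
  defines "P \<equiv> (a * cos t, 0, - c * sin t)"
  shows "P \<in> ellipsoid a b c"
    and "(a^2 - c^2) * (cos t)^2 > a^2 - b^2 \<Longrightarrow>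
           curvature_center a b c P (kappa2 a b c P) = astroida5 a b c t \<and>
           curvature_center a b c P (kappa1 a b c P) = ellipse8 a b c t"
    and "(a^2 - c^2) * (cos t)^2 < a^2 - b^2 \<Longrightarrow>
           curvature_center a b c P (kappa1 a b c P) = astroida5 a b c t \<and>
           curvature_center a b c P (kappa2 a b c P) = ellipse8 a b c t"
  using meridian_curvature_centers[OF assms(1-3), of t, folded P_def]
    meridian_curvature_order[OF assms(1-3), of t]
  by (auto simp: kappa1_def kappa2_def min_def max_def)

lemma meridian_abs_fst_le_iff:
  fixes a b c t :: real
  assumes "a > b" "b > c" "c > 0"
  defines "x6 \<equiv> sqrt ((a^2 - b^2)^3 / (a^2*(a^2 - c^2)))"
  shows "\<bar>fst (astroida5 a b c t)\<bar> \<le> x6 \<longleftrightarrow> (a^2 - c^2) * (cos t)^2 \<le> a^2 - b^2"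
    and "x6 \<le> \<bar>fst (astroida5 a b c t)\<bar> \<longleftrightarrow> a^2 - b^2 \<le> (a^2 - c^2) * (cos t)^2"
    and "\<bar>fst (ellipse8 a b c t)\<bar> \<le> x6 \<longleftrightarrow> (a^2 - c^2) * (cos t)^2 \<le> a^2 - b^2"
    and "x6 \<le> \<bar>fst (ellipse8 a b c t)\<bar> \<longleftrightarrow> a^2 - b^2 \<le> (a^2 - c^2) * (cos t)^2"
proof -
  define u0 where "u0 = (a^2 - b^2) / (a^2 - c^2)"
  have "a^2 > b^2" "b^2 > c^2" "a > 0"
    using assms by (simp_all add: power_strict_mono)
  then have "u0 > 0" "a^2 - c^2 > 0"
    by (simp_all add: u0_def)
  have cmp: "(a^2 - c^2) * (cos t)^2 \<le> a^2 - b^2 \<longleftrightarrow> (cos t)^2 \<le> u0"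
    "a^2 - b^2 \<le> (a^2 - c^2) * (cos t)^2 \<longleftrightarrow> u0 \<le> (cos t)^2"
    using \<open>a^2 - c^2 > 0\<close> by (simp_all add: u0_def pos_le_divide_eq pos_divide_le_eq mult.commute)
  have "E^3/(a^2*D) = (D/a)^2 * (E/D)^3" "E^3/(a^2*D) = (E/a)^2 * (E/D)^1"
    if "D \<noteq> 0" for D E :: real
    using that \<open>a > 0\<close> by (simp_all add: field_simps power2_eq_square power3_eq_cube)
  then have x6: "x6 = sqrt (((a^2 - c^2)/a)^2 * u0^3)" "x6 = sqrt (((a^2 - b^2)/a)^2 * u0^1)"
    unfolding x6_def u0_def using \<open>a^2 - c^2 > 0\<close> by simp_all
  have fst: "\<bar>fst (astroida5 a b c t)\<bar> = sqrt (((a^2 - c^2)/a)^2 * ((cos t)^2)^3)"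
    "\<bar>fst (ellipse8 a b c t)\<bar> = sqrt (((a^2 - b^2)/a)^2 * ((cos t)^2)^1)"
    by (simp_all add: astroida5_def ellipse8_def power_mult_distrib power_divide flip: real_sqrt_abs power_mult)
  have mono: "sqrt (K * u^n) \<le> sqrt (K * v^n) \<longleftrightarrow> u \<le> v"
    if "K > 0" "u \<ge> 0" "v \<ge> 0" "n > 0" for K u v :: real and n :: nat
    using that by simp
  have "((a^2 - c^2)/a)^2 > 0" "((a^2 - b^2)/a)^2 > 0"
    using \<open>a^2 > b^2\<close> \<open>a^2 - c^2 > 0\<close> \<open>a > 0\<close> by simp_all
  then show "\<bar>fst (astroida5 a b c t)\<bar> \<le> x6 \<longleftrightarrow> (a^2 - c^2) * (cos t)^2 \<le> a^2 - b^2"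
    and "x6 \<le> \<bar>fst (astroida5 a b c t)\<bar> \<longleftrightarrow> a^2 - b^2 \<le> (a^2 - c^2) * (cos t)^2"
    unfolding cmp fst x6(1) using \<open>u0 > 0\<close>
    by (simp_all only: mono zero_le_power2 less_imp_le zero_less_numeral)
  show "\<bar>fst (ellipse8 a b c t)\<bar> \<le> x6 \<longleftrightarrow> (a^2 - c^2) * (cos t)^2 \<le> a^2 - b^2"
    and "x6 \<le> \<bar>fst (ellipse8 a b c t)\<bar> \<longleftrightarrow> a^2 - b^2 \<le> (a^2 - c^2) * (cos t)^2"
    unfolding cmp fst x6(2) using \<open>u0 > 0\<close> \<open>((a^2 - b^2)/a)^2 > 0\<close>
    by (simp_all only: mono zero_le_power2 less_imp_le zero_less_one)
qed

lemma astroida5_ellipse8_caustic_sheets: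
  fixes a b c :: real
  assumes "a > b" "b > c" "c > 0"
  defines "x6 \<equiv> sqrt ((a^2 - b^2)^3 / (a^2*(a^2 - c^2)))"
  shows "{p \<in> curve (astroida5 a b c). \<bar>fst p\<bar> > x6} \<subseteq> caustic_sheet2 a b c"
    and "{p \<in> curve (astroida5 a b c). \<bar>fst p\<bar> < x6} \<subseteq> caustic_sheet1 a b c"
    and "{p \<in> curve (ellipse8 a b c). \<bar>fst p\<bar> > x6} \<subseteq> caustic_sheet1 a b c"
    and "{p \<in> curve (ellipse8 a b c). \<bar>fst p\<bar> < x6} \<subseteq> caustic_sheet2 a b c"
proof -
  have sheets: "curvature_center a b c P (kappa1 a b c P) \<in> caustic_sheet1 a b c"
    "curvature_center a b c P (kappa2 a b c P) \<in> caustic_sheet2 a b c"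
    if "P \<in> ellipsoid a b c" for P
    unfolding caustic_sheet1_def caustic_sheet2_def using that by blast+
  note centers = meridian_caustic_points[OF assms(1-3)]
  have outer: "astroida5 a b c t \<in> caustic_sheet2 a b c \<and> ellipse8 a b c t \<in> caustic_sheet1 a b c"
    if "(a^2 - c^2) * (cos t)^2 > a^2 - b^2" for t
    using centers(1)[of t] centers(2)[OF that] sheets by metis
  have inner: "astroida5 a b c t \<in> caustic_sheet1 a b c \<and> ellipse8 a b c t \<in> caustic_sheet2 a b c"
    if "(a^2 - c^2) * (cos t)^2 < a^2 - b^2" for t
    using centers(1)[of t] centers(3)[OF that] sheets by metis
  note cmp = meridian_abs_fst_le_iff[OF assms(1-3), folded x6_def]
  show "{p \<in> curve (astroida5 a b c). \<bar>fst p\<bar> > x6} \<subseteq> caustic_sheet2 a b c"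
    using cmp(1) outer by (auto simp: curve_def not_le[symmetric])
  show "{p \<in> curve (astroida5 a b c). \<bar>fst p\<bar> < x6} \<subseteq> caustic_sheet1 a b c"
    using cmp(2) inner by (auto simp: curve_def not_le[symmetric])
  show "{p \<in> curve (ellipse8 a b c). \<bar>fst p\<bar> > x6} \<subseteq> caustic_sheet1 a b c"
    using cmp(3) outer by (auto simp: curve_def not_le[symmetric])
  show "{p \<in> curve (ellipse8 a b c). \<bar>fst p\<bar> < x6} \<subseteq> caustic_sheet2 a b c"
    using cmp(4) inner by (auto simp: curve_def not_le[symmetric])
qed

lemma astroida5_ellipse8_vector_derivative:
  "(astroida5 a b c has_vector_derivative
     ((a^2 - c^2)/a * (3 * (cos t)^2 * - sin t), 0, (a^2 - c^2)/c * (3 * (sin t)^2 * cos t))) (at t)"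
  "(ellipse8 a b c has_vector_derivative ((a^2 - b^2)/a * - sin t, 0, (b^2 - c^2)/c * cos t)) (at t)"
proof -
  have "astroida5 a b c = (\<lambda>t. ((a^2 - c^2)/a * cos t ^ 3, 0, (a^2 - c^2)/c * sin t ^ 3))"
    "ellipse8 a b c = (\<lambda>t. ((a^2 - b^2)/a * cos t, 0, (b^2 - c^2)/c * sin t))"
    by (simp_all add: fun_eq_iff astroida5_def ellipse8_def)
  then show "(astroida5 a b c has_vector_derivative
     ((a^2 - c^2)/a * (3 * (cos t)^2 * - sin t), 0, (a^2 - c^2)/c * (3 * (sin t)^2 * cos t))) (at t)"
    "(ellipse8 a b c has_vector_derivative ((a^2 - b^2)/a * - sin t, 0, (b^2 - c^2)/c * cos t)) (at t)"
    by (auto intro!: has_vector_derivative_Pair derivative_eq_intros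
        simp flip: has_real_derivative_iff_has_vector_derivative)
qed

section \<open>Tangency and position relative to the ellipsoid\<close>

lemma astroida5_ellipse8_tangent:
  fixes a b c :: real
  assumes "a > b" "b > c" "c > 0"
    and "p \<in> pm_xz (sqrt ((a^2 - b^2)^3 / (a^2*(a^2 - c^2)))) (sqrt ((b^2 - c^2)^3 / (c^2*(a^2 - c^2))))"
  shows "tangent_at (astroida5 a b c) (ellipse8 a b c) p"
proof -
  have "p \<in> curve (astroida5 a b c)"
    using assms astroida5_ellipse8_inter[OF assms(1-3)] by blast
  then obtain t where t: "t \<in> {0..<2*pi}" "p = astroida5 a b c t"
    unfolding curve_def by blast
  have "\<bar>fst p\<bar> = sqrt ((a^2 - b^2)^3 / (a^2*(a^2 - c^2)))"
    using assms(4) ellipse_evolute_inter_tangent(2)[OF assms(1-3)] by (auto simp: pm_xz_def)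
  then have cos2: "(a^2 - c^2) * (cos t)^2 = a^2 - b^2"
    using meridian_abs_fst_le_iff(1,2)[OF assms(1-3), of t] t(2) by auto
  have "a^2 > b^2" "b^2 > c^2" "a > 0"
    using assms by (simp_all add: power_strict_mono)
  then have sin2: "(a^2 - c^2) * (sin t)^2 = b^2 - c^2"
    using cos2 by (simp add: sin_squared_eq algebra_simps)
  have same_point: "astroida5 a b c t = ellipse8 a b c t"
    using cos2 sin2 by (simp add: astroida5_def ellipse8_def power3_eq_cube power2_eq_square mult.assoc)
  define u w where
    "u = ((a^2 - c^2)/a * (3 * (cos t)^2 * - sin t), 0::real, (a^2 - c^2)/c * (3 * (sin t)^2 * cos t))"
    and "w = ((a^2 - b^2)/a * - sin t, 0::real, (b^2 - c^2)/c * cos t)"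
  have derivs: "(astroida5 a b c has_vector_derivative u) (at t)" "(ellipse8 a b c has_vector_derivative w) (at t)"
    unfolding u_def w_def by (rule astroida5_ellipse8_vector_derivative)+
  have "u = 3 *\<^sub>R w"
    using cos2 sin2 by (simp add: u_def w_def mult.assoc mult.left_commute[of 3])
  moreover have "w \<noteq> 0"
    using sin2 \<open>a^2 > b^2\<close> \<open>b^2 > c^2\<close> \<open>a > 0\<close> by (auto simp: w_def zero_prod_def)
  ultimately show ?thesis
    unfolding tangent_at_def using t same_point derivs
    by (intro exI[of _ t] exI[of _ u] exI[of _ w]) auto
qed

lemma ellq_sign_combinations:
  fixes X Y :: real
  assumes "X \<ge> 0" "Y \<ge> 0"
  shows "p \<in> pm_xz (sqrt X) (sqrt Y) \<Longrightarrow> ellq a b c p = X/a^2 + Y/c^2"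
    and "p \<in> pm_yz (sqrt X) (sqrt Y) \<Longrightarrow> ellq a b c p = X/b^2 + Y/c^2"
  using assms by (auto simp: pm_xz_def pm_yz_def ellq_def)

lemma same_sign_trichotomy:
  fixes E X Y k l K :: real
  assumes "E - 1 = k * K" "X - Y = l * K" "k > 0" "l > 0"
  shows "(E = 1 \<longleftrightarrow> X = Y) \<and> (E < 1 \<longleftrightarrow> X < Y) \<and> (E > 1 \<longleftrightarrow> X > Y)"
proof -
  have "E < 1 \<longleftrightarrow> K < 0" "X < Y \<longleftrightarrow> K < 0" "E > 1 \<longleftrightarrow> K > 0" "X > Y \<longleftrightarrow> K > 0"
    using assms by (metis diff_less_0_iff_less diff_gt_0_iff_gt mult_less_0_iff zero_less_mult_iff
        not_less_iff_gr_or_eq)+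
  then show ?thesis
    by (metis not_less_iff_gr_or_eq)
qed

lemma astroida5_ellipse8_tangency_vs_ellipsoid:
  fixes a b c :: real
  assumes "a > b" "b > c" "c > 0"
    and "p \<in> pm_xz (sqrt ((a^2 - b^2)^3 / (a^2*(a^2 - c^2)))) (sqrt ((b^2 - c^2)^3 / (c^2*(a^2 - c^2))))"
  shows "(ellq a b c p = 1 \<longleftrightarrow> 1/a^2 + 1/c^2 = 3/b^2)
       \<and> (ellq a b c p < 1 \<longleftrightarrow> 1/a^2 + 1/c^2 < 3/b^2)
       \<and> (ellq a b c p > 1 \<longleftrightarrow> 1/a^2 + 1/c^2 > 3/b^2)"
proof (rule same_sign_trichotomy)
  define A B C where "A = a^2" and "B = b^2" and "C = c^2"
  have "A > B" "B > C" "C > 0"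
    using assms by (simp_all add: A_def B_def C_def power_strict_mono)
  define K where "K = A*B + B*C - 3*A*C"
  define D where "D = A - C"
  have "A \<noteq> 0" "C \<noteq> 0" "D \<noteq> 0"
    using \<open>A > B\<close> \<open>B > C\<close> \<open>C > 0\<close> by (simp_all add: D_def)
  have "ellq a b c p = (A - B)^3/(A*D)/A + (B - C)^3/(C*D)/C"
    using ellq_sign_combinations(1)[OF ellipse_evolute_inter_tangent(2,3)[OF assms(1-3)] assms(4)]
    by (simp add: A_def B_def C_def D_def)
  also have "\<dots> = (C^2*(A - B)^3 + A^2*(B - C)^3) / (A^2*C^2*D)"
    using \<open>A \<noteq> 0\<close> \<open>C \<noteq> 0\<close> \<open>D \<noteq> 0\<close> by (simp add: field_simps power2_eq_square)
  also have "C^2*(A - B)^3 + A^2*(B - C)^3 = D*(A^2*C^2 + B^2*K)"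
    by (simp add: D_def K_def algebra_simps power2_eq_square power3_eq_cube)
  also have "D*(A^2*C^2 + B^2*K) / (A^2*C^2*D) = 1 + B^2/(A^2*C^2) * K"
    using \<open>A \<noteq> 0\<close> \<open>C \<noteq> 0\<close> \<open>D \<noteq> 0\<close> by (simp add: field_simps)
  finally show "ellq a b c p - 1 = B^2/(A^2*C^2) * K"
    by simp
  show "(1/a^2 + 1/c^2) - 3/b^2 = 1/(A*B*C) * K"
    unfolding A_def[symmetric] B_def[symmetric] C_def[symmetric]
    using \<open>A > B\<close> \<open>B > C\<close> \<open>C > 0\<close> by (simp add: K_def field_simps)
  show "B^2/(A^2*C^2) > 0" "1/(A*B*C) > 0"
    using \<open>A > B\<close> \<open>B > C\<close> \<open>C > 0\<close> by simp_all
qed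

lemma astroida6_ellipse9_position_factor_neg:
  fixes A B C :: real
  assumes "A > B" "B > C" "C > 0" "A + C \<le> 2*B"
  shows "A^2 - 2*A*(B + C) + 3*B*C < 0"
proof -
  have split: "A^2 - 2*A*(B + C) + 3*B*C = (A - B)*(A - 2*B + C) + (A*B - 3*A*C + 4*B*C - 2*B^2)"
    by (simp add: algebra_simps power2_eq_square)
  have "(A - B)*(A - 2*B + C) \<le> 0"
    using assms by (intro mult_nonneg_nonpos) auto
  moreover have "A*B - 3*A*C + 4*B*C - 2*B^2 < 0"
  proof (cases "B \<ge> 3*C")
    case True
    have "A*B - 3*A*C + 4*B*C - 2*B^2 = (A - 2*B + C)*(B - 3*C) + 3*C*(C - B)"
      by (simp add: algebra_simps power2_eq_square)
    moreover have "(A - 2*B + C)*(B - 3*C) \<le> 0" "3*C*(C - B) < 0"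
      using assms True by (auto intro: mult_nonpos_nonneg mult_pos_neg)
    ultimately show ?thesis
      by linarith
  next
    case False
    have "A*B - 3*A*C + 4*B*C - 2*B^2 = (A - B)*(B - 3*C) + B*(C - B)"
      by (simp add: algebra_simps power2_eq_square)
    moreover have "(A - B)*(B - 3*C) < 0" "B*(C - B) < 0"
      using assms False by (auto intro: mult_pos_neg)
    ultimately show ?thesis
      by linarith
  qed
  ultimately show ?thesis
    unfolding split by linarith
qed

lemma astroida6_ellipse9_points_vs_ellipsoid:
  fixes a b c :: real
  assumes "a > b" "b > c" "c > 0" "a^2 + c^2 \<le> 2*b^2"
    and "p \<in> pm_yz (sqrt ((b^2 - a^2)^3*(2*c^2 - b^2 - a^2)^3 / (b^2*(c^2 - b^2)*(b^2 + c^2 - 2*a^2)^3)))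
                     (sqrt ((c^2 - a^2)^3*(2*b^2 - c^2 - a^2)^3 / (c^2*(b^2 - c^2)*(b^2 + c^2 - 2*a^2)^3)))"
  shows "(ellq a b c p = 1 \<longleftrightarrow> 2*b^4 + 2*c^4 - a^2*b^2 - a^2*c^2 - 2*b^2*c^2 = 0)
       \<and> (ellq a b c p < 1 \<longleftrightarrow> 2*b^4 + 2*c^4 - a^2*b^2 - a^2*c^2 - 2*b^2*c^2 < 0)
       \<and> (ellq a b c p > 1 \<longleftrightarrow> 2*b^4 + 2*c^4 - a^2*b^2 - a^2*c^2 - 2*b^2*c^2 > 0)"
proof (rule same_sign_trichotomy)
  define A B C where "A = a^2" and "B = b^2" and "C = c^2"
  have "A > B" "B > C" "C > 0" "A + C \<le> 2*B"
    using assms by (simp_all add: A_def B_def C_def power_strict_mono)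
  define S where "S = 2*B^2 + 2*C^2 - A*B - A*C - 2*B*C"
  define f where "f = A^2 - 2*A*(B + C) + 3*B*C"
  define W where "W = (2*A - B - C)^3"
  have "B \<noteq> 0" "C \<noteq> 0" "B - C \<noteq> 0" "W > 0"
    using \<open>A > B\<close> \<open>B > C\<close> \<open>C > 0\<close> by (simp_all add: W_def)
  have key: "U/(B*(-D)*V)/B + U'/(C*D*V)/C - 1 = (B^2*U' - C^2*U - B^2*C^2*D*V) / (B^2*C^2*D*V)"
    if "D \<noteq> 0" "V \<noteq> 0" for U U' D V :: real
    using that \<open>B \<noteq> 0\<close> \<open>C \<noteq> 0\<close> by (simp add: field_simps power2_eq_square)
  have "(B + C - 2*A)^3 = - W"
    by (simp add: W_def power3_eq_cube algebra_simps)
  have "ellq a b c p = (B - A)^3*(2*C - B - A)^3 / (B*(C - B)*(B + C - 2*A)^3) / B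
      + (C - A)^3*(2*B - C - A)^3 / (C*(B - C)*(B + C - 2*A)^3) / C"
    using ellq_sign_combinations(2)[OF astroida6_ellipse9_inter(2,3)[OF assms(1-4)] assms(5)]
    by (simp add: A_def B_def C_def)
  then have "ellq a b c p - 1 = (B^2*((C - A)^3*(2*B - C - A)^3) - C^2*((B - A)^3*(2*C - B - A)^3)
      - B^2*C^2*(B - C)*(B + C - 2*A)^3) / (B^2*C^2*(B - C)*(B + C - 2*A)^3)"
    using key[of "B - C" "(B + C - 2*A)^3", unfolded minus_diff_eq] \<open>B - C \<noteq> 0\<close> \<open>W > 0\<close>
      \<open>(B + C - 2*A)^3 = - W\<close> by simp
  also have "B^2*((C - A)^3*(2*B - C - A)^3) - C^2*((B - A)^3*(2*C - B - A)^3)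
      - B^2*C^2*(B - C)*(B + C - 2*A)^3 = - (S*A*(B - C)*f^2)"
    by (simp add: S_def f_def algebra_simps power2_eq_square power3_eq_cube)
  also have "(B + C - 2*A)^3 = - W"
    by (simp add: W_def power3_eq_cube algebra_simps)
  also have "- (S*A*(B - C)*f^2) / (B^2*C^2*(B - C)*(- W)) = A*f^2/(B^2*C^2*W) * S"
    using \<open>B \<noteq> 0\<close> \<open>C \<noteq> 0\<close> \<open>B - C \<noteq> 0\<close> \<open>W > 0\<close> by (simp add: field_simps)
  finally show "ellq a b c p - 1 = A*f^2/(B^2*C^2*W) * S" .
  show "(2*b^4 + 2*c^4 - a^2*b^2 - a^2*c^2 - 2*b^2*c^2) - 0 = 1 * S"
    by (simp add: S_def A_def B_def C_def algebra_simps flip: power_mult)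
  have "f < 0"
    unfolding f_def using \<open>A > B\<close> \<open>B > C\<close> \<open>C > 0\<close> \<open>A + C \<le> 2*B\<close> by (rule astroida6_ellipse9_position_factor_neg)
  then show "A*f^2/(B^2*C^2*W) > 0" "(1::real) > 0"
    using \<open>A > B\<close> \<open>B > C\<close> \<open>C > 0\<close> \<open>W > 0\<close> by simp_all
qed

theorem lemma3:
  fixes a b c :: real
  assumes "a > b" and "b > c" and "c > 0"
  shows
   \<comment> \<open>(1)\<close>
   "(a^2 \<ge> 2*b^2 \<longrightarrow>
      (let x0 = sqrt (a^4*(a^2 - 2*b^2)^3 / ((a^2 - b^2)*(a^2 + b^2)^3));
           y0 = sqrt (b^4*(2*a^2 - b^2)^3 / ((a^2 - b^2)*(a^2 + b^2)^3))
       in curve (ellipse1 a b c) \<inter> curve (astroida4 a b c) = pm_xy x0 y0))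
  \<and> \<comment> \<open>(2)\<close>
    (a^2 \<ge> 2*c^2 \<longrightarrow>
      (let x1 = sqrt (a^4*(a^2 - 2*c^2)^3 / ((a^2 - c^2)*(a^2 + c^2)^3));
           z1 = sqrt (c^4*(2*a^2 - c^2)^3 / ((a^2 - c^2)*(a^2 + c^2)^3))
       in curve (ellipse2 a b c) \<inter> curve (astroida5 a b c) = pm_xz x1 z1))
  \<and> \<comment> \<open>(3)\<close>
    (b^2 \<ge> 2*c^2 \<longrightarrow>
      (let y2 = sqrt (b^4*(b^2 - 2*c^2)^3 / ((b^2 - c^2)*(b^2 + c^2)^3));
           z2 = sqrt (c^4*(2*b^2 - c^2)^3 / ((b^2 - c^2)*(b^2 + c^2)^3))
       in curve (ellipse3 a b c) \<inter> curve (astroida6 a b c) = pm_yz y2 z2))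
  \<and> \<comment> \<open>(4)\<close>
    (let xs2 = a^2*(a^2 - c^2)^2*(2*b^2 - c^2) / ((a^2 - b^2)*(2*a^2*b^2 - a^2*c^2 - b^2*c^2));
         ys2 = b^2*(b^2 - c^2)^2*(2*a^2 - c^2) / ((b^2 - a^2)*(2*a^2*b^2 - b^2*c^2 - a^2*c^2))
     in curve (ellipse1 a b c) \<inter> curve (ellipse7 a b c) = {}
        \<and> (\<forall>x y :: complex.
              (x^2 / (complex_of_real a)^2 + y^2 / (complex_of_real b)^2 = 1
               \<and> (complex_of_real a)^2 * x^2 / (complex_of_real (a^2 - c^2))^2
                 + (complex_of_real b)^2 * y^2 / (complex_of_real (b^2 - c^2))^2 = 1)
              \<longleftrightarrow> (x^2 = complex_of_real xs2 \<and> y^2 = complex_of_real ys2))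
        \<and> ys2 < 0)
  \<and> \<comment> \<open>(5)\<close>
    (b^2 \<ge> 2*c^2 \<longrightarrow>
      (let x3 = sqrt (a^2*(a^2 - b^2)^2*(2*c^2 - b^2) / ((a^2 - c^2)*(2*a^2*c^2 - a^2*b^2 - b^2*c^2)));
           z3 = sqrt (c^2*(c^2 - b^2)^2*(2*a^2 - b^2) / ((c^2 - a^2)*(2*a^2*c^2 - a^2*b^2 - b^2*c^2)));
           x1 = sqrt (a^4*(a^2 - 2*c^2)^3 / ((a^2 - c^2)*(a^2 + c^2)^3));
           z1 = sqrt (c^4*(2*a^2 - c^2)^3 / ((a^2 - c^2)*(a^2 + c^2)^3))
       in curve (ellipse2 a b c) \<inter> curve (ellipse8 a b c) = pm_xz x3 z3
          \<and> x1 \<ge> x3 \<and> z1 \<le> z3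
          \<and> (1/a^2 + 1/c^2 = 3/b^2 \<longrightarrow> x1 = x3 \<and> z1 = z3)))
  \<and> \<comment> \<open>(6)\<close>
    (2*b^2 \<ge> a^2 \<and> a^2 \<ge> 2*c^2 \<longrightarrow>
      (let y4 = sqrt (b^2*(b^2 - a^2)^2*(2*c^2 - a^2) / ((b^2 - c^2)*(2*b^2*c^2 - a^2*b^2 - a^2*c^2)));
           z4 = sqrt (c^2*(c^2 - a^2)^2*(2*b^2 - a^2) / ((c^2 - b^2)*(2*b^2*c^2 - a^2*b^2 - a^2*c^2)));
           y2 = sqrt (b^4*(b^2 - 2*c^2)^3 / ((b^2 - c^2)*(b^2 + c^2)^3));
           z2 = sqrt (c^4*(2*b^2 - c^2)^3 / ((b^2 - c^2)*(b^2 + c^2)^3))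
       in curve (ellipse3 a b c) \<inter> curve (ellipse9 a b c) = pm_yz y4 z4
          \<and> (b^2 \<ge> 2*c^2 \<longrightarrow>
               ((y2 \<ge> y4 \<and> z2 \<le> z4) \<longleftrightarrow>
                2*b^4 + 2*c^4 - a^2*b^2 - a^2*c^2 - 2*b^2*c^2 \<ge> 0))))
  \<and> \<comment> \<open>(7)\<close>
    (a^2 + c^2 \<ge> 2*b^2 \<longrightarrow>
      (let x5 = sqrt ((a^2 - c^2)^3*(2*b^2 - a^2 - c^2)^3 / (a^2*(b^2 - a^2)*(a^2 + b^2 - 2*c^2)^3));
           y5 = sqrt ((b^2 - c^2)^3*(2*a^2 - b^2 - c^2)^3 / (b^2*(a^2 - b^2)*(a^2 + b^2 - 2*c^2)^3))
       in curve (astroida4 a b c) \<inter> curve (ellipse7 a b c) = pm_xy x5 y5))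
  \<and> \<comment> \<open>(8)\<close>
    (let x6 = sqrt ((a^2 - b^2)^3 / (a^2*(a^2 - c^2)));
         z6 = sqrt ((b^2 - c^2)^3 / (c^2*(a^2 - c^2)))
     in curve (astroida5 a b c) \<inter> curve (ellipse8 a b c) = pm_xz x6 z6
        \<and> (\<forall>p \<in> pm_xz x6 z6. tangent_at (astroida5 a b c) (ellipse8 a b c) p)
        \<and> (({p \<in> curve (astroida5 a b c). \<bar>fst p\<bar> > x6} \<subseteq> caustic_sheet1 a b c
             \<and> {p \<in> curve (astroida5 a b c). \<bar>fst p\<bar> < x6} \<subseteq> caustic_sheet2 a b c)
           \<or> ({p \<in> curve (astroida5 a b c). \<bar>fst p\<bar> > x6} \<subseteq> caustic_sheet2 a b c
             \<and> {p \<in> curve (astroida5 a b c). \<bar>fst p\<bar> < x6} \<subseteq> caustic_sheet1 a b c))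
        \<and> (({p \<in> curve (ellipse8 a b c). \<bar>fst p\<bar> > x6} \<subseteq> caustic_sheet1 a b c
             \<and> {p \<in> curve (ellipse8 a b c). \<bar>fst p\<bar> < x6} \<subseteq> caustic_sheet2 a b c)
           \<or> ({p \<in> curve (ellipse8 a b c). \<bar>fst p\<bar> > x6} \<subseteq> caustic_sheet2 a b c
             \<and> {p \<in> curve (ellipse8 a b c). \<bar>fst p\<bar> < x6} \<subseteq> caustic_sheet1 a b c))
        \<and> (\<forall>p \<in> pm_xz x6 z6.
              (ellq a b c p = 1 \<longleftrightarrow> 1/a^2 + 1/c^2 = 3/b^2)
            \<and> (ellq a b c p < 1 \<longleftrightarrow> 1/a^2 + 1/c^2 < 3/b^2)
            \<and> (ellq a b c p > 1 \<longleftrightarrow> 1/a^2 + 1/c^2 > 3/b^2)))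
  \<and> \<comment> \<open>(9)\<close>
    (a^2 + c^2 \<le> 2*b^2 \<longrightarrow>
      (let y7 = sqrt ((b^2 - a^2)^3*(2*c^2 - b^2 - a^2)^3 / (b^2*(c^2 - b^2)*(b^2 + c^2 - 2*a^2)^3));
           z7 = sqrt ((c^2 - a^2)^3*(2*b^2 - c^2 - a^2)^3 / (c^2*(b^2 - c^2)*(b^2 + c^2 - 2*a^2)^3))
       in curve (astroida6 a b c) \<inter> curve (ellipse9 a b c) = pm_yz y7 z7
          \<and> (\<forall>p \<in> pm_yz y7 z7.
                (ellq a b c p = 1 \<longleftrightarrow> 2*b^4 + 2*c^4 - a^2*b^2 - a^2*c^2 - 2*b^2*c^2 = 0)
              \<and> (ellq a b c p < 1 \<longleftrightarrow> 2*b^4 + 2*c^4 - a^2*b^2 - a^2*c^2 - 2*b^2*c^2 < 0)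
              \<and> (ellq a b c p > 1 \<longleftrightarrow> 2*b^4 + 2*c^4 - a^2*b^2 - a^2*c^2 - 2*b^2*c^2 > 0))))"
proof -
  have "b > 0" "a > c"
    using assms by auto
  note sheets = astroida5_ellipse8_caustic_sheets[OF assms]
  show ?thesis
    unfolding Let_def
    by (intro conjI impI; rule ellipse1_astroida4_inter[OF assms(1) \<open>b > 0\<close>]
        ellipse2_astroida5_inter[OF \<open>a > c\<close> assms(3)] ellipse3_astroida6_inter[OF assms(2,3)]
        ellipse1_ellipse7_disjoint[OF assms] allI[OF allI[OF ellipse1_ellipse7_complex_common_points[OF assms]]]
        ellipse1_ellipse7_pencil_y_neg[OF assms]
        ellipse2_ellipse8_inter[OF assms] ellipse2_ellipse8_vs_astroida5[OF assms]
        ellipse3_ellipse9_inter[OF assms] ellipse3_ellipse9_vs_astroida6[OF assms]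
        astroida4_ellipse7_inter[OF assms]
        astroida5_ellipse8_inter[OF assms] ballI[OF astroida5_ellipse8_tangent[OF assms]]
        disjI2[OF conjI[OF sheets(1,2)]] disjI1[OF conjI[OF sheets(3,4)]]
        ballI[OF astroida5_ellipse8_tangency_vs_ellipsoid[OF assms]]
        astroida6_ellipse9_inter(1)[OF assms] ballI[OF astroida6_ellipse9_points_vs_ellipsoid[OF assms]];
        simp)
qed

end
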